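(* Let $k\subset K$ be a finite totally ramified Galois extension of complete discrete valuation fields with Galois group $G$, degree $n$ and ramification depth $d$, and let $i\in\mathbb Z$. (5) For every $\alpha\in X_i$ one has $\alpha\cdot(1\otimes\pi^{-i})\in X_0$ and $r_X\big(\alpha\cdot(1\otimes\pi^{-i})\big)=p_{d+i}(\phi(\alpha))$. (6) For every $\alpha\in K\otimes_kK$, if $\phi(\alpha)=\sum_{\sigma\in G}a_\sigma\sigma$ then $\phi(t(\alpha))=\sum_{\sigma\in G}\sigma(a_{\sigma^{-1}})\sigma$.
   Context: Notation: $O_K$, $\mathfrak m$ the ring of integers of $K$ and its maximal ideal, $O_k$ that of $k$, $\bar k$ the residue field, $r:O_K\to\bar k$ reduction, $v$ the valuation of $K$ with $v(K^* )=\mathbb Z$, $\pi$ a fixed uniformizer of $K$, $d=v(\mathfrak D_{K/k})-n+1$ ($\mathfrak D_{K/k}$ the different), $c_\pi=\mathrm{Tr}_{K/k}(\pi^{-d})\in O_k^*$. Tensor products are over $k$; for $O_k$-submodules $A,B\subset K$, $A\otimes B$ is the $O_k$-submodule of $K\otimes_kK$ generated by $a\otimes b$. $X_i=\sum_{j\in\mathbb Z}\mathfrak m^j\otimes\mathfrak m^{i-j}$; $X_0$ is a ring and $r_X:X_0/X_1\to R=\bar k[X]/(X^n-1)$ is the unique unital $\bar k$-algebra isomorphism sending the class of $\pi\otimes\pi^{-1}$ to $X$ (we also write $r_X(\beta)$ for $\beta\in X_0$). $t$ is the swap $x\otimes y\mapsto y\otimes x$. $\phi:K\otimes_kK\to K[G]$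 is the $k$-linear bijection with $\phi(x\otimes y)=x\sum_{\sigma\in G}\sigma(y)\sigma$; it is known that $\phi(X_i)=\mathfrak C_{i+d}$, where $\mathfrak C_l=\{f\in K[G]: v(f(x))-v(x)\ge l\ \forall x\in K^*\}$ and $f=\sum a_\sigma\sigma$ acts by $f(x)=\sum a_\sigma\sigma(x)$. For $f\in\mathfrak C_l$, $p_l(f)=r(c_\pi)^{-1}\sum_{j=0}^{n-1}r\big(f(\pi^{j-l})/\pi^j\big)X^j\in R$. *)

theory Defs
  imports "HOL-Computational_Algebra.Polynomial"
begin

text \<open>The big field K is the whole type 'a; the subfield k is a set.
 A valuation v : K^* -> Z is a function 'a => int (its value at 0 is irrelevant).\<close>

definition mpow :: "('a::field \<Rightarrow> int) \<Rightarrow> int \<Rightarrow> 'a set" where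
  "mpow v j = {x. x = 0 \<or> j \<le> v x}"   (* m^j ; O_K = mpow v 0 *)

definition discrete_val :: "('a::field \<Rightarrow> int) \<Rightarrow> bool" where
  "discrete_val v \<longleftrightarrow>
     (\<forall>x y. x \<noteq> 0 \<longrightarrow> y \<noteq> 0 \<longrightarrow> v (x * y) = v x + v y) \<and>
     (\<forall>x y. x \<noteq> 0 \<longrightarrow> y \<noteq> 0 \<longrightarrow> x + y \<noteq> 0 \<longrightarrow> min (v x) (v y) \<le> v (x + y)) \<and>
     v ` (UNIV - {0}) = UNIV"

definition v_complete :: "('a::field \<Rightarrow> int) \<Rightarrow> 'a set \<Rightarrow> bool" where
  "v_complete v S \<longleftrightarrow>
     (\<forall>s::nat \<Rightarrow> 'a. (\<forall>p. s p \<in> S) \<longrightarrow>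
        (\<forall>N. \<exists>M. \<forall>p q. M \<le> p \<longrightarrow> M \<le> q \<longrightarrow> s p - s q \<in> mpow v N) \<longrightarrow>
        (\<exists>L\<in>S. \<forall>N. \<exists>M. \<forall>p. M \<le> p \<longrightarrow> s p - L \<in> mpow v N))"

definition is_subfield :: "'a::field set \<Rightarrow> bool" where
  "is_subfield k \<longleftrightarrow> 0 \<in> k \<and> 1 \<in> k \<and>
     (\<forall>x\<in>k. \<forall>y\<in>k. x + y \<in> k \<and> x * y \<in> k) \<and> (\<forall>x\<in>k. - x \<in> k \<and> inverse x \<in> k)"

definition Gal :: "'a::field set \<Rightarrow> ('a \<Rightarrow> 'a) set" where
  "Gal k = {\<sigma>. bij \<sigma> \<and> (\<forall>x y. \<sigma> (x + y) = \<sigma> x + \<sigma> y \<and> \<sigma> (x * y) = \<sigma> x * \<sigma> y)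
              \<and> \<sigma> 1 = 1 \<and> (\<forall>c\<in>k. \<sigma> c = c)}"

definition finite_galois :: "'a::field set \<Rightarrow> bool" where
  "finite_galois k \<longleftrightarrow> finite (Gal k) \<and> {x. \<forall>\<sigma>\<in>Gal k. \<sigma> x = x} = k"

definition Tr :: "'a::field set \<Rightarrow> 'a \<Rightarrow> 'a" where
  "Tr k x = (\<Sum>\<sigma>\<in>Gal k. \<sigma> x)"

text \<open>v(D_{K/k}): the codifferent {x. Tr(x O_K) \<subseteq> O_k} equals m^{-v(D)}.\<close>
definition different_val :: "'a::field set \<Rightarrow> ('a \<Rightarrow> int) \<Rightarrow> int" where
  "different_val k v = (THE \<delta>. {x. \<forall>y\<in>mpow v 0. Tr k (x * y) \<in> k \<inter> mpow v 0} = mpow v (- \<delta>))"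

definition depth :: "'a::field set \<Rightarrow> ('a \<Rightarrow> int) \<Rightarrow> int" where
  "depth k v = different_val k v - int (card (Gal k)) + 1"

definition c_pi :: "'a::field set \<Rightarrow> ('a \<Rightarrow> int) \<Rightarrow> 'a \<Rightarrow> 'a" where
  "c_pi k v \<pi> = Tr k (\<pi> powi (- depth k v))"

text \<open>Residue field: an abstract field 'b with reduction r : O_K -> 'b, a surjective
 ring homomorphism with kernel m.\<close>
definition residue_map :: "('a::field \<Rightarrow> int) \<Rightarrow> ('a \<Rightarrow> 'b::field) \<Rightarrow> bool" where
  "residue_map v r \<longleftrightarrow>
     (\<forall>x\<in>mpow v 0. \<forall>y\<in>mpow v 0. r (x + y) = r x + r y \<and> r (x * y) = r x * r y) \<and>
     r 1 = 1 \<and> r ` mpow v 0 = UNIV \<and> {x \<in> mpow v 0. r x = 0} = mpow v 1"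

text \<open>An element of K \<otimes>_k K is represented by a formal sum \<Sum> a_i \<otimes> b_i, i.e. a list of
 pairs. Two formal sums represent the same tensor iff they agree under every pair of
 k-linear functionals K -> k (this characterises equality in K \<otimes>_k K over a field).\<close>

definition klin :: "'a::field set \<Rightarrow> ('a \<Rightarrow> 'a) \<Rightarrow> bool" where
  "klin k f \<longleftrightarrow> (\<forall>x. f x \<in> k) \<and> (\<forall>x y. f (x + y) = f x + f y) \<and> (\<forall>c\<in>k. \<forall>x. f (c * x) = c * f x)"

definition teq :: "'a::field set \<Rightarrow> ('a \<times> 'a) list \<Rightarrow> ('a \<times> 'a) list \<Rightarrow> bool" where
  "teq k xs ys \<longleftrightarrow> (\<forall>f g. klin k f \<longrightarrow> klin k g \<longrightarrow>
      (\<Sum>(a, b)\<leftarrow>xs. f a * g b) = (\<Sum>(a, b)\<leftarrow>ys. f a * g b))"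

definition tadd :: "('a \<times> 'a) list \<Rightarrow> ('a \<times> 'a) list \<Rightarrow> ('a \<times> 'a) list" where
  "tadd xs ys = xs @ ys"

definition tneg :: "('a::ring \<times> 'a) list \<Rightarrow> ('a \<times> 'a) list" where
  "tneg xs = map (\<lambda>(a, b). (- a, b)) xs"

definition tscal :: "'a::ring \<Rightarrow> ('a \<times> 'a) list \<Rightarrow> ('a \<times> 'a) list" where
  "tscal c xs = map (\<lambda>(a, b). (c * a, b)) xs"

definition tmul :: "('a::ring \<times> 'a) list \<Rightarrow> ('a \<times> 'a) list \<Rightarrow> ('a \<times> 'a) list" where
  "tmul xs ys = concat (map (\<lambda>(a, b). map (\<lambda>(c, d). (a * c, b * d)) ys) xs)"

definition tswap :: "('a \<times> 'a) list \<Rightarrow> ('a \<times> 'a) list" where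
  "tswap xs = map prod.swap xs"

text \<open>X_i = \<Sum>_j m^j \<otimes> m^{i-j}: tensors representable by sums of a \<otimes> b with v a + v b \<ge> i.\<close>
definition Xmem :: "'a::field set \<Rightarrow> ('a \<Rightarrow> int) \<Rightarrow> int \<Rightarrow> ('a \<times> 'a) list \<Rightarrow> bool" where
  "Xmem k v i xs \<longleftrightarrow> (\<exists>ys. teq k xs ys \<and>
      (\<forall>(a, b)\<in>set ys. \<exists>j. a \<in> mpow v j \<and> b \<in> mpow v (i - j)))"

text \<open>An element \<Sum> a_\<sigma> \<sigma> of K[G] is the coefficient function \<sigma> \<mapsto> a_\<sigma> (only values on G matter).\<close>
definition phi :: "('a::field \<times> 'a) list \<Rightarrow> ('a \<Rightarrow> 'a) \<Rightarrow> 'a" where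
  "phi xs = (\<lambda>\<sigma>. (\<Sum>(a, b)\<leftarrow>xs. a * \<sigma> b))"

definition act :: "'a::field set \<Rightarrow> (('a \<Rightarrow> 'a) \<Rightarrow> 'a) \<Rightarrow> 'a \<Rightarrow> 'a" where
  "act k f x = (\<Sum>\<sigma>\<in>Gal k. f \<sigma> * \<sigma> x)"

section \<open>R = kbar[X]/(X^n - 1), elements given by their reduced representatives (degree < n)\<close>

definition Xn1 :: "nat \<Rightarrow> 'b::field poly" where
  "Xn1 n = monom 1 n - 1"

definition p_map :: "'a::field set \<Rightarrow> ('a \<Rightarrow> int) \<Rightarrow> 'a \<Rightarrow> ('a \<Rightarrow> 'b::field) \<Rightarrow> int
                      \<Rightarrow> (('a \<Rightarrow> 'a) \<Rightarrow> 'a) \<Rightarrow> 'b poly" where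
  "p_map k v \<pi> r l f = smult (inverse (r (c_pi k v \<pi>)))
      (\<Sum>j<card (Gal k). monom (r (act k f (\<pi> powi (int j - l)) / \<pi> ^ j)) j)"

text \<open>r_X : X_0/X_1 -> R, the unital kbar-algebra isomorphism with class(\<pi>\<otimes>\<pi>^{-1}) \<mapsto> X,
 given as a map on representatives in X_0 (values = reduced polynomials).\<close>
definition is_rX :: "'a::field set \<Rightarrow> ('a \<Rightarrow> int) \<Rightarrow> 'a \<Rightarrow> ('a \<Rightarrow> 'b::field)
                      \<Rightarrow> (('a \<times> 'a) list \<Rightarrow> 'b poly) \<Rightarrow> bool" where
  "is_rX k v \<pi> r \<rho> \<longleftrightarrow>
     (let n = card (Gal k); X0 = {xs. Xmem k v 0 xs} in
       (\<forall>xs\<in>X0. degree (\<rho> xs) < n) \<and>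
       (\<forall>xs\<in>X0. \<forall>ys\<in>X0. \<rho> xs = \<rho> ys \<longleftrightarrow> Xmem k v 1 (tadd xs (tneg ys))) \<and>
       (\<forall>p. degree p < n \<longrightarrow> (\<exists>xs\<in>X0. \<rho> xs = p)) \<and>
       (\<forall>xs\<in>X0. \<forall>ys\<in>X0. \<rho> (tadd xs ys) = \<rho> xs + \<rho> ys) \<and>
       (\<forall>xs\<in>X0. \<forall>ys\<in>X0. \<rho> (tmul xs ys) = (\<rho> xs * \<rho> ys) mod Xn1 n) \<and>
       (\<forall>c\<in>k \<inter> mpow v 0. \<forall>xs\<in>X0. \<rho> (tscal c xs) = smult (r c) (\<rho> xs)) \<and>
       \<rho> [(1, 1)] = 1 \<and>
       \<rho> [(\<pi>, inverse \<pi>)] = [:0, 1:] mod Xn1 n)"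

end

(*
  Galois automorphisms preserve v: the conjugate polynomial of an element of valuation 1 has
  coefficients in k, whose valuations are multiples of n, so it is Eisenstein.  Artin's bound
  [K : k] <= n then shows that the residue fields of k and K agree, and that the codifferent is a
  power of m, which gives Tr(m^t) \<subseteq> m^(t+d) and makes c_pi a unit.

  Statement (5) is additive in alpha, so it suffices to treat a simple tensor a \<otimes> b with
  a in m^J and b in m^(-J).  Writing J = nq + j with 0 <= j < n and choosing u in k of valuation nq,
  a \<otimes> b = pi^j e \<otimes> pi^(-j) e' with e, e' integral.  Modulo X_1 one may replace e, e' by
  representatives in k, so r_X gives r(e) r(e') X^j.  On the other side only the j-th coefficient
  of p_d survives: the trace lands in k, and rounding its valuation up to a multiple of n pushes
  every other coefficient into m.
*)
theory Submission
  imports Defs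
begin

lemma int_mult_add_eq_imp_eq:
  fixes a b :: int
  assumes "i < n" "j < n" "int n * a + int i = int n * b + int j"
  shows "i = j"
proof -
  have "(int n * a + int i) mod int n = int i" "(int n * b + int j) mod int n = int j"
    using assms(1,2) by simp_all
  then show ?thesis
    using assms(3) by simp
qed

locale discrete_valuation =
  fixes v :: "'a::field \<Rightarrow> int"
  assumes discrete_val: "discrete_val v"
begin

lemma val_mult: "x \<noteq> 0 \<Longrightarrow> y \<noteq> 0 \<Longrightarrow> v (x * y) = v x + v y"
  using discrete_val unfolding discrete_val_def by blast

lemma val_add: "x \<noteq> 0 \<Longrightarrow> y \<noteq> 0 \<Longrightarrow> x + y \<noteq> 0 \<Longrightarrow> min (v x) (v y) \<le> v (x + y)"
  using discrete_val unfolding discrete_val_def by blast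

lemma val_surj: "\<exists>x. x \<noteq> 0 \<and> v x = m"
  using discrete_val unfolding discrete_val_def by (metis DiffE UNIV_I image_iff singletonI)

lemma val_one [simp]: "v 1 = 0"
  using val_mult[of 1 1] by simp

lemma val_inverse: "x \<noteq> 0 \<Longrightarrow> v (inverse x) = - v x"
  using val_mult[of x "inverse x"] by simp

lemma val_divide: "x \<noteq> 0 \<Longrightarrow> y \<noteq> 0 \<Longrightarrow> v (x / y) = v x - v y"
  by (simp add: divide_inverse val_mult val_inverse)

lemma val_minus [simp]: "v (- x) = v x"
  by (cases "x = 0") (use val_mult[of "-x" "-x"] val_mult[of x x] in auto)

lemma val_power: "x \<noteq> 0 \<Longrightarrow> v (x ^ m) = int m * v x"
  by (induction m) (auto simp: val_mult algebra_simps)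

lemma val_power_int: "x \<noteq> 0 \<Longrightarrow> v (x powi m) = m * v x"
  by (cases "m \<ge> 0") (auto simp: power_int_def val_power val_inverse)

lemma mpow_iff: "x \<in> mpow v B \<longleftrightarrow> x = 0 \<or> B \<le> v x"
  by (simp add: mpow_def)

lemma zero_in_mpow [simp]: "0 \<in> mpow v B"
  by (simp add: mpow_iff)

lemma one_in_mpow [simp]: "1 \<in> mpow v 0"
  by (simp add: mpow_iff)

lemma mpow_val_self: "x \<in> mpow v (v x)"
  by (simp add: mpow_iff)

lemma mpow_mono: "x \<in> mpow v A \<Longrightarrow> B \<le> A \<Longrightarrow> x \<in> mpow v B"
  by (auto simp: mpow_iff)

lemma mpow_add:
  assumes "x \<in> mpow v B" "y \<in> mpow v B"
  shows "x + y \<in> mpow v B"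
proof (cases "x = 0 \<or> y = 0 \<or> x + y = 0")
  case False
  then have "min (v x) (v y) \<le> v (x + y)" by (simp add: val_add)
  with assms show ?thesis by (auto simp: mpow_iff)
qed (use assms in auto)

lemma mpow_minus: "x \<in> mpow v B \<Longrightarrow> - x \<in> mpow v B"
  by (simp add: mpow_iff)

lemma mpow_diff: "x \<in> mpow v B \<Longrightarrow> y \<in> mpow v B \<Longrightarrow> x - y \<in> mpow v B"
  using mpow_add[of x B "- y"] mpow_minus[of y] by simp

lemma mpow_mult: "x \<in> mpow v A \<Longrightarrow> y \<in> mpow v B \<Longrightarrow> x * y \<in> mpow v (A + B)"
  by (cases "x = 0 \<or> y = 0") (auto simp: mpow_iff val_mult)

lemma mpow_sum: "(\<And>i. i \<in> I \<Longrightarrow> f i \<in> mpow v B) \<Longrightarrow> sum f I \<in> mpow v B"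
  by (induction I rule: infinite_finite_induct) (auto intro: mpow_add)

lemma mpow_eq_iff: "mpow v A = mpow v B \<longleftrightarrow> A = B"
proof
  assume eq: "mpow v A = mpow v B"
  obtain x y where "x \<noteq> 0" "v x = A" "y \<noteq> 0" "v y = B"
    using val_surj by metis
  moreover have "x \<in> mpow v B" "y \<in> mpow v A"
    using eq mpow_val_self[of x] mpow_val_self[of y] \<open>v x = A\<close> \<open>v y = B\<close> by auto
  ultimately show "A = B"
    by (auto simp: mpow_iff)
qed simp

lemma val_add_eq_left:
  assumes "x \<noteq> 0" "y \<in> mpow v (v x + 1)"
  shows "x + y \<noteq> 0 \<and> v (x + y) = v x"
proof (cases "y = 0")
  case False
  with assms have lt: "v x < v y" by (simp add: mpow_iff)
  then have ne: "x + y \<noteq> 0"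
    by (metis add_eq_0_iff less_irrefl val_minus)
  have "min (v (x + y)) (v (- y)) \<le> v x"
    using val_add[of "x + y" "- y"] ne False assms(1) by simp
  then show ?thesis
    using val_add[OF assms(1) False ne] lt ne by auto
qed (use assms in simp)

text \<open>If the nonzero terms have pairwise distinct valuations, the least one is attained only
  once and is therefore the valuation of the sum.\<close>

lemma mpow_sum_distinct_vals:
  assumes "finite I" "sum t I \<in> mpow v B" "i \<in> I"
    and distinct: "\<And>i j. i \<in> I \<Longrightarrow> j \<in> I \<Longrightarrow> t i \<noteq> 0 \<Longrightarrow> t j \<noteq> 0 \<Longrightarrow> v (t i) = v (t j) \<Longrightarrow> i = j"
  shows "t i \<in> mpow v B"
proof (cases "t i = 0")
  case False
  let ?J = "{i \<in> I. t i \<noteq> 0}"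
  obtain p where "is_arg_min (\<lambda>j. v (t j)) (\<lambda>j. j \<in> ?J) p"
    using ex_is_arg_min_if_finite[of ?J "\<lambda>j. v (t j)"] assms(1,3) False by auto
  then have p: "p \<in> ?J" "\<And>j. j \<in> ?J \<Longrightarrow> v (t p) \<le> v (t j)"
    by (auto simp: is_arg_min_linorder)
  have rest: "sum t (I - {p}) \<in> mpow v (v (t p) + 1)"
  proof (rule mpow_sum)
    fix j assume "j \<in> I - {p}"
    then show "t j \<in> mpow v (v (t p) + 1)"
      using p distinct[of p j] by (fastforce simp: mpow_iff)
  qed
  have "sum t I = t p + sum t (I - {p})"
    using assms(1) p(1) by (simp add: sum.remove)
  then have "sum t I \<noteq> 0 \<and> v (sum t I) = v (t p)"
    using val_add_eq_left[OF _ rest] p(1) by simp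
  then show ?thesis
    using assms(2,3) p(2)[of i] False by (auto simp: mpow_iff)
qed simp

lemma sum_distinct_vals_eq_0:
  assumes "finite I" "sum t I = 0" "i \<in> I"
    and "\<And>i j. i \<in> I \<Longrightarrow> j \<in> I \<Longrightarrow> t i \<noteq> 0 \<Longrightarrow> t j \<noteq> 0 \<Longrightarrow> v (t i) = v (t j) \<Longrightarrow> i = j"
  shows "t i = 0"
  using mpow_sum_distinct_vals[of I t "v (t i) + 1" i] assms by (auto simp: mpow_iff)

lemma distinct_vals_mod:
  assumes "\<And>q. q < m \<Longrightarrow> t q \<noteq> 0 \<Longrightarrow> \<exists>w. v (t q) = int m * w + int q"
    and "i \<in> {..<m}" "j \<in> {..<m}" "t i \<noteq> 0" "t j \<noteq> 0" "v (t i) = v (t j)"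
  shows "i = j"
proof -
  obtain wi wj where "v (t i) = int m * wi + int i" "v (t j) = int m * wj + int j"
    using assms by blast
  then show ?thesis
    using assms(2-6) int_mult_add_eq_imp_eq[of i m j wi wj] by simp
qed

lemma root_in_mpow1:
  assumes coeffs: "\<And>i. i < n \<Longrightarrow> b i \<in> mpow v 1" and root: "z ^ n + (\<Sum>i<n. b i * z ^ i) = 0"
  shows "z \<in> mpow v 1"
proof (rule ccontr)
  assume "z \<notin> mpow v 1"
  then have z: "z \<noteq> 0" "v z \<le> 0" by (auto simp: mpow_iff)
  have "(\<Sum>i<n. b i * z ^ i) \<in> mpow v (v (z ^ n) + 1)"
  proof (rule mpow_sum)
    fix i assume i: "i \<in> {..<n}"
    show "b i * z ^ i \<in> mpow v (v (z ^ n) + 1)"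
    proof (cases "b i = 0")
      case False
      have "(int n - int i) * v z \<le> 0"
        using i z by (intro mult_nonneg_nonpos) auto
      moreover have "1 \<le> v (b i)"
        using coeffs[of i] i False by (simp add: mpow_iff)
      ultimately show ?thesis
        using False z by (simp add: mpow_iff val_mult val_power algebra_simps)
    qed simp
  qed
  then show False
    using val_add_eq_left[of "z ^ n"] root z by simp
qed

end

lemma Gal_add: "\<sigma> \<in> Gal k \<Longrightarrow> \<sigma> (x + y) = \<sigma> x + \<sigma> y"
  by (simp add: Gal_def)

lemma Gal_mult: "\<sigma> \<in> Gal k \<Longrightarrow> \<sigma> (x * y) = \<sigma> x * \<sigma> y"
  by (simp add: Gal_def)

lemma Gal_one: "\<sigma> \<in> Gal k \<Longrightarrow> \<sigma> 1 = 1"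
  by (simp add: Gal_def)

lemma Gal_fixes: "\<sigma> \<in> Gal k \<Longrightarrow> c \<in> k \<Longrightarrow> \<sigma> c = c"
  by (simp add: Gal_def)

lemma Gal_bij: "\<sigma> \<in> Gal k \<Longrightarrow> bij \<sigma>"
  by (simp add: Gal_def)

lemma Gal_zero: "\<sigma> \<in> Gal k \<Longrightarrow> \<sigma> 0 = (0::'a::field)"
  using Gal_add[of \<sigma> k 0 0] by (metis add.right_neutral add_left_cancel)

lemma Gal_minus: "\<sigma> \<in> Gal k \<Longrightarrow> \<sigma> (- x) = - \<sigma> (x::'a::field)"
  using Gal_add[of \<sigma> k x "- x"] Gal_zero[of \<sigma> k] by (simp add: add_eq_0_iff)

lemma Gal_diff: "\<sigma> \<in> Gal k \<Longrightarrow> \<sigma> (x - y) = \<sigma> x - \<sigma> (y::'a::field)"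
  using Gal_add[of \<sigma> k x "- y"] Gal_minus[of \<sigma> k y] by simp

lemma Gal_eq_0_iff: "\<sigma> \<in> Gal k \<Longrightarrow> \<sigma> x = 0 \<longleftrightarrow> x = (0::'a::field)"
  using Gal_bij[of \<sigma> k] Gal_zero[of \<sigma> k] by (metis bij_is_inj injD)

lemma Gal_inverse: "\<sigma> \<in> Gal k \<Longrightarrow> \<sigma> (inverse x) = inverse (\<sigma> (x::'a::field))"
  using Gal_mult[of \<sigma> k x "inverse x"] Gal_one[of \<sigma> k] Gal_zero[of \<sigma> k]
  by (cases "x = 0") (auto simp: inverse_unique)

lemma Gal_power: "\<sigma> \<in> Gal k \<Longrightarrow> \<sigma> (x ^ m) = \<sigma> (x::'a::field) ^ m"
  by (induction m) (auto simp: Gal_one Gal_mult)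

lemma Gal_power_int: "\<sigma> \<in> Gal k \<Longrightarrow> \<sigma> (x powi m) = \<sigma> (x::'a::field) powi m"
  by (simp add: power_int_def Gal_power Gal_inverse)

lemma Gal_sum: "\<sigma> \<in> Gal k \<Longrightarrow> \<sigma> (sum f A) = (\<Sum>a\<in>A. \<sigma> (f a :: 'a::field))"
  by (induction A rule: infinite_finite_induct) (auto simp: Gal_zero Gal_add)

lemma id_in_Gal: "(\<lambda>x. x) \<in> Gal k"
  using bij_id by (simp add: Gal_def id_def)

lemma comp_in_Gal: "\<sigma> \<in> Gal k \<Longrightarrow> \<tau> \<in> Gal k \<Longrightarrow> \<sigma> \<circ> \<tau> \<in> Gal k"
  by (simp add: Gal_def bij_comp)

lemma Gal_inv_apply: "\<sigma> \<in> Gal k \<Longrightarrow> \<sigma> (inv \<sigma> x) = x"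
  by (meson Gal_bij bij_inv_eq_iff)

lemma Gal_apply_inv: "\<sigma> \<in> Gal k \<Longrightarrow> inv \<sigma> (\<sigma> x) = x"
  using Gal_bij by (metis bij_inv_eq_iff)

lemma inv_in_Gal:
  assumes \<sigma>: "\<sigma> \<in> Gal k"
  shows "inv \<sigma> \<in> Gal k"
proof -
  have inj: "inj \<sigma>"
    using Gal_bij[OF \<sigma>] bij_is_inj by blast
  have "inv \<sigma> (x + y) = inv \<sigma> x + inv \<sigma> y" for x y
    by (rule injD[OF inj]) (simp add: Gal_add[OF \<sigma>] Gal_inv_apply[OF \<sigma>])
  moreover have "inv \<sigma> (x * y) = inv \<sigma> x * inv \<sigma> y" for x y
    by (rule injD[OF inj]) (simp add: Gal_mult[OF \<sigma>] Gal_inv_apply[OF \<sigma>])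
  moreover have "inv \<sigma> 1 = 1"
    by (rule injD[OF inj]) (simp add: Gal_one[OF \<sigma>] Gal_inv_apply[OF \<sigma>])
  moreover have "inv \<sigma> c = c" if "c \<in> k" for c
    by (rule injD[OF inj]) (simp add: Gal_fixes[OF \<sigma> that] Gal_inv_apply[OF \<sigma>])
  ultimately show ?thesis
    using Gal_bij[OF \<sigma>] by (simp add: Gal_def bij_imp_bij_inv)
qed

lemma Gal_comp_bij_betw:
  assumes \<sigma>: "\<sigma> \<in> Gal k"
  shows "bij_betw (\<lambda>\<tau>. \<sigma> \<circ> \<tau>) (Gal k) (Gal k)"
proof (rule bij_betw_byWitness[where f' = "\<lambda>\<tau>. inv \<sigma> \<circ> \<tau>"])
qed (auto simp: comp_in_Gal inv_in_Gal \<sigma> Gal_inv_apply[OF \<sigma>] Gal_apply_inv[OF \<sigma>] fun_eq_iff)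

lemma subfield_closed:
  assumes "is_subfield k"
  shows "0 \<in> k" "1 \<in> k" "x \<in> k \<Longrightarrow> y \<in> k \<Longrightarrow> x + y \<in> k" "x \<in> k \<Longrightarrow> y \<in> k \<Longrightarrow> x * y \<in> k"
    "x \<in> k \<Longrightarrow> - x \<in> k" "x \<in> k \<Longrightarrow> inverse x \<in> k"
  using assms unfolding is_subfield_def by blast+

lemma subfield_divide: "is_subfield k \<Longrightarrow> x \<in> k \<Longrightarrow> y \<in> k \<Longrightarrow> x / y \<in> k"
  by (metis divide_inverse subfield_closed(4,6))

lemma character_relation_shift:
  fixes \<chi>0 :: "'a::monoid_mult \<Rightarrow> 'b::comm_ring"
  assumes "\<And>\<chi> x y. \<chi> \<in> insert \<chi>0 S \<Longrightarrow> \<chi> (x * y) = \<chi> x * \<chi> y"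
    and "\<And>x. c0 * \<chi>0 x + (\<Sum>\<chi>\<in>S. c \<chi> * \<chi> x) = 0"
  shows "(\<Sum>\<chi>\<in>S. c \<chi> * (\<chi> y - \<chi>0 y) * \<chi> x) = 0"
proof -
  have "(\<Sum>\<chi>\<in>S. c \<chi> * \<chi> (y * x)) = (\<Sum>\<chi>\<in>S. c \<chi> * \<chi> y * \<chi> x)"
    by (intro sum.cong) (simp_all add: assms(1) mult.assoc)
  then have "(\<Sum>\<chi>\<in>S. c \<chi> * (\<chi> y - \<chi>0 y) * \<chi> x)
      = (\<Sum>\<chi>\<in>S. c \<chi> * \<chi> (y * x)) - \<chi>0 y * (\<Sum>\<chi>\<in>S. c \<chi> * \<chi> x)"
    by (simp add: sum_subtractf sum_distrib_left algebra_simps)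
  also have "\<dots> = - (c0 * \<chi>0 (y * x)) + \<chi>0 y * (c0 * \<chi>0 x)"
  proof -
    have "(\<Sum>\<chi>\<in>S. c \<chi> * \<chi> z) = - (c0 * \<chi>0 z)" for z
      using assms(2)[of z] by (simp add: eq_neg_iff_add_eq_0 add.commute)
    then show ?thesis
      by simp
  qed
  finally show ?thesis
    using assms(1)[of \<chi>0 y x] by (simp add: algebra_simps)
qed

lemma dedekind_independence:
  fixes S :: "('a::monoid_mult \<Rightarrow> 'b::idom) set"
  assumes "finite S"
    and "\<And>\<chi> x y. \<chi> \<in> S \<Longrightarrow> \<chi> (x * y) = \<chi> x * \<chi> y"
    and "\<And>\<chi>. \<chi> \<in> S \<Longrightarrow> \<chi> 1 = 1"
    and "\<And>x. (\<Sum>\<chi>\<in>S. c \<chi> * \<chi> x) = 0"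
    and "\<chi> \<in> S"
  shows "c \<chi> = 0"
  using assms
proof (induction S arbitrary: c \<chi> rule: finite_induct)
  case (insert \<chi>0 S)
  have relation: "c \<chi>0 * \<chi>0 x + (\<Sum>\<chi>\<in>S. c \<chi> * \<chi> x) = 0" for x
    using insert.prems(3)[of x] insert.hyps by simp
  have S0: "c \<chi> = 0" if \<chi>: "\<chi> \<in> S" for \<chi>
  proof -
    obtain y where "\<chi> y \<noteq> \<chi>0 y"
      using \<chi> insert.hyps(2) by (metis ext)
    moreover have "c \<chi> * (\<chi> y - \<chi>0 y) = 0"
      using insert.IH[of "\<lambda>\<chi>. c \<chi> * (\<chi> y - \<chi>0 y)" \<chi>] insert.prems(1,2) \<chi>
        character_relation_shift[OF insert.prems(1) relation]
      by blast
    ultimately show ?thesis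
      by simp
  qed
  moreover have "\<chi>0 1 = 1"
    using insert.prems(2) by simp
  ultimately have "c \<chi>0 = 0"
    using relation[of 1] by simp
  with S0 show ?case
    using insert.prems(4) by auto
qed simp

lemma pivot_back_substitution:
  fixes w :: "'i \<Rightarrow> 'e \<Rightarrow> 'a::field"
  assumes "finite S" "p \<in> S" "w p e0 \<noteq> 0"
    and reduced: "\<forall>e\<in>E. (\<Sum>q\<in>S - {p}. y' q * (w q e - w q e0 / w p e0 * w p e)) = 0"
  defines "y \<equiv> \<lambda>q. if q = p then - (\<Sum>q\<in>S - {p}. y' q * w q e0) / w p e0 else y' q"
  shows "\<forall>e\<in>insert e0 E. (\<Sum>q\<in>S. y q * w q e) = 0"
proof -
  define A where "A = (\<Sum>q\<in>S - {p}. y' q * w q e0)"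
  have split: "(\<Sum>q\<in>S. y q * w q e) = - A / w p e0 * w p e + (\<Sum>q\<in>S - {p}. y' q * w q e)" for e
  proof -
    have "(\<Sum>q\<in>S - {p}. y q * w q e) = (\<Sum>q\<in>S - {p}. y' q * w q e)"
      by (intro sum.cong) (auto simp: y_def)
    then show ?thesis
      using assms(1,2) by (simp add: sum.remove y_def A_def)
  qed
  have "(\<Sum>q\<in>S - {p}. y' q * (w q e - w q e0 / w p e0 * w p e))
      = (\<Sum>q\<in>S - {p}. y' q * w q e) - A / w p e0 * w p e" for e
  proof -
    have "(\<Sum>q\<in>S - {p}. y' q * (w q e - w q e0 / w p e0 * w p e))
        = (\<Sum>q\<in>S - {p}. y' q * w q e - (y' q * w q e0) * (w p e / w p e0))"
      by (intro sum.cong) (auto simp: algebra_simps)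
    then show ?thesis
      unfolding A_def by (simp add: sum_subtractf sum_distrib_right sum_divide_distrib)
  qed
  then show ?thesis
    using reduced split assms(3) by (simp add: A_def)
qed

lemma homogeneous_linear_system_nontrivial:
  fixes w :: "'i \<Rightarrow> 'e \<Rightarrow> 'a::field"
  assumes "finite E" "finite S" "card E < card S"
  shows "\<exists>y. (\<exists>q\<in>S. y q \<noteq> 0) \<and> (\<forall>e\<in>E. (\<Sum>q\<in>S. y q * w q e) = 0)"
  using assms
proof (induction E arbitrary: S w rule: finite_induct)
  case empty
  then obtain q where "q \<in> S"
    by (metis card.empty card_gt_0_iff ex_in_conv)
  then show ?case
    by (intro exI[of _ "\<lambda>_. 1"]) auto
next
  case (insert e0 E)
  show ?case
  proof (cases "\<forall>q\<in>S. w q e0 = 0")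
    case True
    then show ?thesis
      using insert.IH[OF insert.prems(1), of w] insert.prems(2) insert.hyps by auto
  next
    case False
    then obtain p where p: "p \<in> S" "w p e0 \<noteq> 0" by auto
    have "card E < card (S - {p})"
      using insert.prems insert.hyps p(1) by simp
    then obtain y' where y': "\<exists>q\<in>S - {p}. y' q \<noteq> 0"
      "\<forall>e\<in>E. (\<Sum>q\<in>S - {p}. y' q * (w q e - w q e0 / w p e0 * w p e)) = 0"
      using insert.IH[of "S - {p}" "\<lambda>q e. w q e - w q e0 / w p e0 * w p e"] insert.prems(1) by auto
    show ?thesis
      using pivot_back_substitution[OF insert.prems(1) p y'(2)] y'(1)
      by (intro exI[of _ "\<lambda>q. if q = p then - (\<Sum>q\<in>S - {p}. y' q * w q e0) / w p e0 else y' q"]) auto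
  qed
qed

lemma map_poly_add_hom:
  assumes "f 0 = 0" "\<And>x y. f (x + y) = f x + f y"
  shows "map_poly f (p + q) = map_poly f p + map_poly f q"
  by (intro poly_eqI) (simp add: coeff_map_poly assms)

lemma map_poly_mult_hom:
  fixes f :: "'a::comm_ring_1 \<Rightarrow> 'b::comm_ring_1"
  assumes "f 0 = 0" "\<And>x y. f (x + y) = f x + f y" "\<And>x y. f (x * y) = f x * f y"
  shows "map_poly f (p * q) = map_poly f p * map_poly f q"
proof (induction p rule: pCons_induct)
  case (pCons a p)
  have "map_poly f (pCons a p * q) = map_poly f (smult a q) + map_poly f (pCons 0 (p * q))"
    by (simp add: map_poly_add_hom[of f, OF assms(1,2)])
  also have "\<dots> = smult (f a) (map_poly f q) + pCons 0 (map_poly f p * map_poly f q)"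
    using map_poly_smult[of f, OF assms(1) assms(3)] map_poly_pCons[of f, OF assms(1)] pCons.IH
    by (simp add: assms(1))
  also have "\<dots> = map_poly f (pCons a p) * map_poly f q"
    by (simp add: map_poly_pCons[of f, OF assms(1)])
  finally show ?case .
qed simp

lemma map_poly_prod_hom:
  fixes f :: "'a::comm_ring_1 \<Rightarrow> 'b::comm_ring_1"
  assumes "f 0 = 0" "\<And>x y. f (x + y) = f x + f y" "\<And>x y. f (x * y) = f x * f y" "f 1 = 1"
  shows "map_poly f (\<Prod>t\<in>T. h t) = (\<Prod>t\<in>T. map_poly f (h t))"
  by (induction T rule: infinite_finite_induct) (simp_all add: map_poly_mult_hom[of f, OF assms(1-3)] assms(4))

lemma sum_list_sum_commute: "(\<Sum>x\<leftarrow>xs. \<Sum>s\<in>S. F x s) = (\<Sum>s\<in>S. \<Sum>x\<leftarrow>xs. F x s)"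
  by (induction xs) (auto simp: sum.distrib)

lemma klin_add: "klin k f \<Longrightarrow> f (x + y) = f x + f y"
  unfolding klin_def by blast

lemma klin_scale: "klin k f \<Longrightarrow> c \<in> k \<Longrightarrow> f (c * x) = c * f x"
  unfolding klin_def by blast

lemma klin_minus: "klin k f \<Longrightarrow> f (- x) = - f (x::'a::field)"
proof -
  assume f: "klin k f"
  have "f 0 + f 0 = f 0 + 0"
    using klin_add[OF f, of 0 0] by simp
  then have "f 0 = 0"
    by (rule add_left_imp_eq)
  then show ?thesis
    using klin_add[OF f, of x "- x"] by (simp add: add_eq_0_iff)
qed

lemma klin_diff: "klin k f \<Longrightarrow> f (x - y) = f x - f (y::'a::field)"
  using klin_add[of k f x "- y"] klin_minus[of k f y] by simp

lemma klin_mult_right: "klin k f \<Longrightarrow> klin k (\<lambda>x. f (x * P))"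
  unfolding klin_def by (simp add: distrib_right mult.assoc)

lemma teq_trans: "teq k xs ys \<Longrightarrow> teq k ys zs \<Longrightarrow> teq k xs zs"
  unfolding teq_def by simp

lemma tensor_sum_tadd_tneg:
  "klin k f \<Longrightarrow> (\<Sum>(a, b)\<leftarrow>tadd xs (tneg ys). f a * g b) = (\<Sum>(a, b)\<leftarrow>xs. f a * g b) - (\<Sum>(a, b)\<leftarrow>ys. f a * g b)"
  unfolding tadd_def tneg_def by (induction ys) (auto simp: klin_minus)

lemma teq_residue_expand:
  assumes "c \<in> k" "c' \<in> k"
  shows "teq k (tadd [(A * e, B * e')] (tneg [(c * c' * A, B)]))
    [(A * (e - c), B * e'), (c * A, B * (e' - c'))]"
  unfolding teq_def
proof (intro allI impI)
  fix f g :: "'a::field \<Rightarrow> 'a" assume f: "klin k f" and g: "klin k g"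
  have "A * (e - c) = A * e - c * A" "B * (e' - c') = B * e' - c' * B"
    by (simp_all add: algebra_simps)
  then have F: "f (c * A) = c * f A"
    "f (A * (e - c)) = f (A * e) - c * f A" "g (B * (e' - c')) = g (B * e') - c' * g B"
    using assms by (simp_all add: klin_scale[OF f] klin_scale[OF g] klin_diff[OF f] klin_diff[OF g])
  have F': "f (c * c' * A) = c * c' * f A"
    using klin_scale[OF f assms(1), of "c' * A"] klin_scale[OF f assms(2), of A] by (simp add: mult.assoc)
  have "(\<Sum>(a, b)\<leftarrow>tadd [(A * e, B * e')] (tneg [(c * c' * A, B)]). f a * g b)
      = f (A * e) * g (B * e') - f (c * c' * A) * g B"
    by (simp add: tensor_sum_tadd_tneg[OF f])
  also have "\<dots> = f (A * (e - c)) * g (B * e') + f (c * A) * g (B * (e' - c'))"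
    unfolding F F' by (simp add: algebra_simps)
  finally show "(\<Sum>(a, b)\<leftarrow>tadd [(A * e, B * e')] (tneg [(c * c' * A, B)]). f a * g b)
      = (\<Sum>(a, b)\<leftarrow>[(A * (e - c), B * e'), (c * A, B * (e' - c'))]. f a * g b)"
    by simp
qed

definition X_generators :: "('a::field \<Rightarrow> int) \<Rightarrow> int \<Rightarrow> ('a \<times> 'a) list \<Rightarrow> bool" where
  "X_generators v i ys \<longleftrightarrow> (\<forall>(a, b)\<in>set ys. \<exists>j. a \<in> mpow v j \<and> b \<in> mpow v (i - j))"

lemma X_generators_Nil [simp]: "X_generators v i []"
  by (simp add: X_generators_def)

lemma X_generators_Cons [simp]:
  "X_generators v i ((a, b) # ys) \<longleftrightarrow> (\<exists>j. a \<in> mpow v j \<and> b \<in> mpow v (i - j)) \<and> X_generators v i ys"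
  by (simp add: X_generators_def)

lemma Xmem_iff: "Xmem k v i xs \<longleftrightarrow> (\<exists>ys. teq k xs ys \<and> X_generators v i ys)"
  by (simp add: Xmem_def X_generators_def)

lemma Xmem_teq: "teq k xs ys \<Longrightarrow> Xmem k v i ys \<Longrightarrow> Xmem k v i xs"
  unfolding Xmem_iff using teq_trans by blast

lemma X_generators_Xmem: "X_generators v i ys \<Longrightarrow> Xmem k v i ys"
  unfolding Xmem_iff teq_def by blast

lemma Xmem_teq_diff: "teq k xs ys \<Longrightarrow> Xmem k v i (tadd xs (tneg ys))"
  using Xmem_teq[of k _ "[]"] X_generators_Xmem[of v i "[]"]
  by (simp add: teq_def tensor_sum_tadd_tneg X_generators_def)

lemma tmul_single: "tmul xs [(c, P)] = map (\<lambda>(a, b). (a * c, b * P)) xs"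
  unfolding tmul_def by (induction xs) auto

lemma teq_mult_right:
  assumes "teq k xs ys"
  shows "teq k (tmul xs [(1, P)]) (tmul ys [(1, P)])"
  unfolding teq_def tmul_single
proof (intro allI impI)
  fix f g assume "klin k f" "klin k g"
  then have "(\<Sum>(a, b)\<leftarrow>xs. f a * g (b * P)) = (\<Sum>(a, b)\<leftarrow>ys. f a * g (b * P))"
    using assms klin_mult_right[of k g P] unfolding teq_def by blast
  then show "(\<Sum>(a, b)\<leftarrow>map (\<lambda>(a, b). (a * 1, b * P)) xs. f a * g b) =
             (\<Sum>(a, b)\<leftarrow>map (\<lambda>(a, b). (a * 1, b * P)) ys. f a * g b)"
    by (simp add: case_prod_unfold o_def)
qed

lemma teq_scale_swap:
  assumes "c \<in> k" "c \<noteq> 0"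
  shows "teq k [(c * a, b)] [(a, c * b)]"
  unfolding teq_def using assms by (simp add: klin_scale)

lemma phi_Cons: "phi (y # ys) \<sigma> = phi [y] \<sigma> + phi ys \<sigma>"
  by (cases y) (simp add: phi_def)

lemma phi_tswap:
  assumes \<sigma>: "\<sigma> \<in> Gal k"
  shows "phi (tswap \<alpha>) \<sigma> = \<sigma> (phi \<alpha> (inv \<sigma>))"
  unfolding phi_def tswap_def
  by (induction \<alpha>) (auto simp: Gal_add[OF \<sigma>] Gal_mult[OF \<sigma>] Gal_zero[OF \<sigma>] Gal_inv_apply[OF \<sigma>] mult.commute)

lemma act_phi_single: "act k (phi [(a, b)]) x = a * Tr k (b * x)"
  unfolding act_def Tr_def phi_def sum_distrib_left
  by (intro sum.cong refl) (simp add: Gal_mult[of _ k] mult.assoc)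

lemma act_phi_Cons: "act k (phi (y # ys)) x = act k (phi [y]) x + act k (phi ys) x"
  unfolding act_def phi_Cons[of y ys] distrib_right by (rule sum.distrib)

lemma degree_Xn1:
  assumes "0 < m"
  shows "degree (Xn1 m :: 'b::field poly) = m"
proof -
  have "degree (- 1 :: 'b poly) < degree (monom (1::'b) m)"
    using assms by (simp add: degree_monom_eq)
  then have "degree (monom (1::'b) m + (- 1)) = degree (monom (1::'b) m)"
    by (rule degree_add_eq_left)
  then show ?thesis
    by (simp add: Xn1_def degree_monom_eq)
qed

locale totally_ramified_galois = discrete_valuation v for v :: "'a::field \<Rightarrow> int" +
  fixes k :: "'a set" and \<pi> :: 'a
  assumes subfield: "is_subfield k"
    and galois: "finite_galois k"
    and val_k: "v ` (k - {0}) = range (\<lambda>z. int (card (Gal k)) * z)"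
    and val_pi: "v \<pi> = 1"
    and pi_nonzero: "\<pi> \<noteq> 0"
begin

abbreviation "n \<equiv> card (Gal k)"

lemma finite_Gal: "finite (Gal k)"
  using galois by (simp add: finite_galois_def)

lemma card_Gal_pos: "0 < n"
  using finite_Gal id_in_Gal[of k] card_gt_0_iff by blast

lemma fixed_in_k: "(\<And>\<sigma>. \<sigma> \<in> Gal k \<Longrightarrow> \<sigma> x = x) \<Longrightarrow> x \<in> k"
  using galois unfolding finite_galois_def by blast

lemmas k_closed = subfield_closed[OF subfield] subfield_divide[OF subfield]

lemma val_k_dvd: "c \<in> k \<Longrightarrow> c \<noteq> 0 \<Longrightarrow> \<exists>z. v c = int n * z"
  using val_k by blast

lemma val_k_exists: "\<exists>c\<in>k. c \<noteq> 0 \<and> v c = int n * z"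
proof -
  have "int n * z \<in> v ` (k - {0})"
    using val_k by auto
  then show ?thesis by auto
qed

lemma k_mpow_round_up:
  assumes "c \<in> k" "c \<in> mpow v (int n * z - int n + 1)"
  shows "c \<in> mpow v (int n * z)"
proof (cases "c = 0")
  case False
  obtain w where w: "v c = int n * w"
    using val_k_dvd assms(1) False by blast
  then have "int n * (z - 1) < int n * w"
    using assms(2) False by (simp add: mpow_iff algebra_simps)
  then have "z \<le> w"
    using card_Gal_pos by (simp add: mult_less_cancel_left)
  then show ?thesis
    using w card_Gal_pos by (simp add: mpow_iff mult_left_mono)
qed simp

lemma k_mpow_pos: "c \<in> k \<Longrightarrow> c \<in> mpow v 1 \<Longrightarrow> c \<in> mpow v (int n)"
  using k_mpow_round_up[of c 1] by simp

lemma k_mpow_nonneg: "c \<in> k \<Longrightarrow> c \<in> mpow v (1 - int n) \<Longrightarrow> c \<in> mpow v 0"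
  using k_mpow_round_up[of c 0] by simp

lemma Tr_in_k: "Tr k x \<in> k"
proof (rule fixed_in_k)
  fix \<sigma> assume \<sigma>: "\<sigma> \<in> Gal k"
  then show "\<sigma> (Tr k x) = Tr k x"
    using sum.reindex_bij_betw[OF Gal_comp_bij_betw[OF \<sigma>], of "\<lambda>\<tau>. \<tau> x"]
    by (simp add: Tr_def Gal_sum)
qed

lemma Tr_add: "Tr k (x + y) = Tr k x + Tr k y"
  by (simp add: Tr_def Gal_add sum.distrib)

lemma Tr_zero [simp]: "Tr k 0 = 0"
  by (simp add: Tr_def Gal_zero)

lemma Tr_diff: "Tr k (x - y) = Tr k x - Tr k y"
  by (simp add: Tr_def Gal_diff sum_subtractf)

lemma Tr_scale: "c \<in> k \<Longrightarrow> Tr k (c * x) = c * Tr k x"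
  by (simp add: Tr_def Gal_mult Gal_fixes sum_distrib_left)

lemma Tr_divide: "c \<in> k \<Longrightarrow> Tr k (x / c) = Tr k x / c"
  using Tr_scale[of "inverse c" x] k_closed(6)[of c] by (simp add: divide_inverse mult.commute)

lemma mpow_pi_power_int: "\<pi> powi m \<in> mpow v m"
  using pi_nonzero by (simp add: mpow_iff val_power_int val_pi)

lemma Gal_independent:
  "(\<And>x. (\<Sum>\<sigma>\<in>Gal k. c \<sigma> * \<sigma> x) = 0) \<Longrightarrow> \<sigma> \<in> Gal k \<Longrightarrow> c \<sigma> = 0"
  using dedekind_independence[OF finite_Gal, of c] Gal_mult[of _ k] Gal_one[of _ k] by blast

lemma Tr_nonzero: "\<exists>x. Tr k x \<noteq> 0"
  using Gal_independent[of "\<lambda>_. 1" "\<lambda>x. x"] id_in_Gal[of k] by (auto simp: Tr_def)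

lemma Gal_system_twist:
  assumes \<sigma>: "\<sigma> \<in> Gal k" and sol: "\<And>\<tau>. \<tau> \<in> Gal k \<Longrightarrow> (\<Sum>q\<in>S. c q * \<tau> (x q)) = 0"
    and \<tau>: "\<tau> \<in> Gal k"
  shows "(\<Sum>q\<in>S. \<sigma> (c q) * \<tau> (x q)) = 0"
proof -
  have "(\<Sum>q\<in>S. \<sigma> (c q) * \<tau> (x q)) = \<sigma> (\<Sum>q\<in>S. c q * (inv \<sigma> \<circ> \<tau>) (x q))"
    by (simp add: Gal_sum[OF \<sigma>] Gal_mult[OF \<sigma>] Gal_inv_apply[OF \<sigma>])
  then show ?thesis
    using sol[OF comp_in_Gal[OF inv_in_Gal[OF \<sigma>] \<tau>]] Gal_zero[OF \<sigma>] by simp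
qed

lemma Gal_system_min_solution_fixed:
  assumes "finite S" "q0 \<in> S" "c q0 = 1"
    and sol: "\<And>\<tau>. \<tau> \<in> Gal k \<Longrightarrow> (\<Sum>q\<in>S. c q * \<tau> (x q)) = 0"
    and min: "\<And>z. (\<exists>q\<in>S. z q \<noteq> 0) \<Longrightarrow> (\<forall>\<tau>\<in>Gal k. (\<Sum>q\<in>S. z q * \<tau> (x q)) = 0) \<Longrightarrow>
        card {q\<in>S. c q \<noteq> 0} \<le> card {q\<in>S. z q \<noteq> 0}"
    and \<sigma>: "\<sigma> \<in> Gal k" and "q \<in> S"
  shows "\<sigma> (c q) = c q"
proof (rule ccontr)
  assume ne: "\<sigma> (c q) \<noteq> c q"
  \<comment> \<open>\<sigma> \<circ> c - c is a solution with smaller support\<close>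
  define z where "z q = \<sigma> (c q) - c q" for q
  have "(\<Sum>q\<in>S. z q * \<tau> (x q)) = 0" if \<tau>: "\<tau> \<in> Gal k" for \<tau>
    unfolding z_def using Gal_system_twist[OF \<sigma> sol \<tau>] sol[OF \<tau>]
    by (simp add: left_diff_distrib sum_subtractf)
  then have "card {q\<in>S. c q \<noteq> 0} \<le> card {q\<in>S. z q \<noteq> 0}"
    using min[of z] ne \<open>q \<in> S\<close> unfolding z_def by auto
  moreover have "{q\<in>S. z q \<noteq> 0} \<subseteq> {q\<in>S. c q \<noteq> 0} - {q0}"
    unfolding z_def using assms(3) Gal_one[OF \<sigma>] Gal_zero[OF \<sigma>] by auto
  then have "card {q\<in>S. z q \<noteq> 0} < card {q\<in>S. c q \<noteq> 0}"
    using assms(1-3) by (intro le_less_trans[OF card_mono card_Diff1_less]) auto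
  ultimately show False
    by simp
qed

lemma k_linear_dependent:
  fixes x :: "'i \<Rightarrow> 'a"
  assumes "finite S" "n < card S"
  shows "\<exists>c. (\<forall>q\<in>S. c q \<in> k) \<and> (\<exists>q\<in>S. c q \<noteq> 0) \<and> (\<Sum>q\<in>S. c q * x q) = 0"
proof -
  define Sol where "Sol = {y. (\<exists>q\<in>S. y q \<noteq> 0) \<and> (\<forall>\<tau>\<in>Gal k. (\<Sum>q\<in>S. y q * \<tau> (x q)) = 0)}"
  have "Sol \<noteq> {}"
    using homogeneous_linear_system_nontrivial[OF finite_Gal assms, of "\<lambda>q \<tau>. \<tau> (x q)"]
    unfolding Sol_def by auto
  then obtain y where y: "y \<in> Sol"
    and y_min: "\<And>z. z \<in> Sol \<Longrightarrow> card {q\<in>S. y q \<noteq> 0} \<le> card {q\<in>S. z q \<noteq> 0}"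
    using ex_has_least_nat[of "\<lambda>y. y \<in> Sol" _ "\<lambda>y. card {q\<in>S. y q \<noteq> 0}"] by blast
  obtain q0 where q0: "q0 \<in> S" "y q0 \<noteq> 0"
    using y unfolding Sol_def by auto
  define c where "c q = y q / y q0" for q
  have "{q\<in>S. c q \<noteq> 0} = {q\<in>S. y q \<noteq> 0}"
    unfolding c_def using q0 by auto
  moreover have c_sol: "(\<Sum>q\<in>S. c q * \<tau> (x q)) = 0" if "\<tau> \<in> Gal k" for \<tau>
    using y that unfolding Sol_def c_def by (simp add: sum_divide_distrib[symmetric])
  moreover have c_q0: "c q0 = 1"
    unfolding c_def using q0 by simp
  ultimately have "\<sigma> (c q) = c q" if "\<sigma> \<in> Gal k" "q \<in> S" for \<sigma> q
    using Gal_system_min_solution_fixed[OF assms(1) q0(1), of c x] y_min that unfolding Sol_def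
    by auto
  then have "\<forall>q\<in>S. c q \<in> k"
    using fixed_in_k by blast
  moreover have "\<exists>q\<in>S. c q \<noteq> 0"
    using q0(1) c_q0 by force
  ultimately show ?thesis
    using c_sol[OF id_in_Gal] by auto
qed

definition conj_poly :: "'a \<Rightarrow> 'a poly" where
  "conj_poly y = (\<Prod>\<tau>\<in>Gal k. [:- \<tau> y, 1:])"

lemma coeff_conj_poly_in_k: "coeff (conj_poly y) i \<in> k"
proof (rule fixed_in_k)
  fix \<sigma> assume \<sigma>: "\<sigma> \<in> Gal k"
  have "map_poly \<sigma> (conj_poly y) = (\<Prod>\<tau>\<in>Gal k. [:- (\<sigma> \<circ> \<tau>) y, 1:])"
    unfolding conj_poly_def
    by (subst map_poly_prod_hom)
      (auto simp: Gal_zero[OF \<sigma>] Gal_add[OF \<sigma>] Gal_mult[OF \<sigma>] Gal_one[OF \<sigma>] Gal_minus[OF \<sigma>] map_poly_pCons)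
  also have "\<dots> = conj_poly y"
    unfolding conj_poly_def
    using prod.reindex_bij_betw[OF Gal_comp_bij_betw[OF \<sigma>], of "\<lambda>\<tau>. [:- \<tau> y, 1:]"] by simp
  finally show "\<sigma> (coeff (conj_poly y) i) = coeff (conj_poly y) i"
    by (metis Gal_zero[OF \<sigma>] coeff_map_poly)
qed

lemma conj_poly_expand: "poly (conj_poly y) z = z ^ n + (\<Sum>i<n. coeff (conj_poly y) i * z ^ i)"
proof -
  have deg: "degree (conj_poly y) = n"
    unfolding conj_poly_def by (subst degree_prod_eq_sum_degree) auto
  have "lead_coeff (conj_poly y) = 1"
    unfolding conj_poly_def lead_coeff_prod by simp
  then show ?thesis
    using poly_altdef[of "conj_poly y" z] deg by (simp add: lessThan_Suc_atMost[symmetric])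
qed

lemma conj_poly_root: "\<tau> \<in> Gal k \<Longrightarrow> poly (conj_poly y) (\<tau> y) = 0"
  unfolding conj_poly_def poly_prod using finite_Gal by (auto intro: prod_zero)

text \<open>When v y = 1 the valuations of the terms b_i y^i are congruent to i modulo n,
  so they cannot cancel against y^n and conj_poly y is an Eisenstein polynomial.\<close>

lemma conj_poly_eisenstein:
  assumes y: "v y = 1" "y \<noteq> 0" and i: "i < n"
  shows "coeff (conj_poly y) i \<in> mpow v 1"
proof -
  define b where "b i = coeff (conj_poly y) i" for i
  have b_k: "b i \<in> k" for i
    unfolding b_def by (rule coeff_conj_poly_in_k)
  have "(\<Sum>i<n. b i * y ^ i) = - (y ^ n)"
    using conj_poly_root[OF id_in_Gal, of y] conj_poly_expand[of y y]
    unfolding b_def by (simp add: eq_neg_iff_add_eq_0 add.commute)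
  then have sum_in: "(\<Sum>i<n. b i * y ^ i) \<in> mpow v (int n)"
    using y by (simp add: mpow_iff val_power)
  have mod_vals: "\<exists>w. v (b q * y ^ q) = int n * w + int q" if nz: "b q * y ^ q \<noteq> 0" for q
  proof -
    obtain w where "v (b q) = int n * w"
      using val_k_dvd[OF b_k] nz by (metis mult_zero_left)
    then show ?thesis
      using y nz by (simp add: val_mult val_power)
  qed
  have "b i * y ^ i \<in> mpow v (int n)"
  proof (rule mpow_sum_distinct_vals[OF finite_lessThan sum_in])
    show "i \<in> {..<n}"
      using i by simp
  qed (rule distinct_vals_mod[OF mod_vals])
  then have "b i \<in> mpow v (int n - int i)"
    using y by (cases "b i = 0") (auto simp: mpow_iff val_mult val_power)
  then show ?thesis
    unfolding b_def[symmetric] using i by (auto intro: mpow_mono)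
qed

lemma Gal_mpow1:
  assumes "v y = 1" "y \<noteq> 0" "\<tau> \<in> Gal k"
  shows "\<tau> y \<in> mpow v 1"
  by (rule root_in_mpow1[where b = "coeff (conj_poly y)" and n = n])
    (use conj_poly_eisenstein[OF assms(1,2)] conj_poly_root[OF assms(3)] conj_poly_expand in auto)

lemma Gal_val_pi:
  assumes \<tau>: "\<tau> \<in> Gal k"
  shows "v (\<tau> \<pi>) = 1"
proof -
  have \<tau>': "inv \<tau> \<in> Gal k"
    using inv_in_Gal[OF \<tau>] .
  define s where "s = v (\<tau> \<pi>)"
  define t where "t = v (inv \<tau> \<pi>)"
  have nz: "\<tau> \<pi> \<noteq> 0" "inv \<tau> \<pi> \<noteq> 0"
    using Gal_eq_0_iff[OF \<tau>] Gal_eq_0_iff[OF \<tau>'] pi_nonzero by auto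
  have "1 \<le> s" "1 \<le> t"
    using Gal_mpow1[OF val_pi pi_nonzero \<tau>] Gal_mpow1[OF val_pi pi_nonzero \<tau>'] nz
    by (auto simp: s_def t_def mpow_iff)
  \<comment> \<open>v z = 1 gives v (inv \<tau> z) \<ge> 1, and inv \<tau> z = \<pi> (inv \<tau> \<pi>)^(1-s) then forces s \<le> 1\<close>
  define z where "z = \<tau> \<pi> * \<pi> powi (1 - s)"
  have "v z = 1" "z \<noteq> 0"
    using nz pi_nonzero by (simp_all add: z_def val_mult val_power_int val_pi s_def)
  then have "inv \<tau> z \<in> mpow v 1"
    using Gal_mpow1[OF _ _ \<tau>'] by blast
  moreover have "inv \<tau> z = \<pi> * inv \<tau> \<pi> powi (1 - s)"
    by (simp add: z_def Gal_mult[OF \<tau>'] Gal_power_int[OF \<tau>'] Gal_apply_inv[OF \<tau>])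
  ultimately have "1 \<le> 1 + (1 - s) * t"
    using nz pi_nonzero by (simp add: mpow_iff val_mult val_power_int val_pi t_def)
  moreover have "(1 - s) * t \<le> (1 - s) * 1"
    using \<open>1 \<le> s\<close> \<open>1 \<le> t\<close> by (intro mult_left_mono_neg) auto
  ultimately show ?thesis
    using \<open>1 \<le> s\<close> s_def by simp
qed

lemma Gal_val:
  assumes \<tau>: "\<tau> \<in> Gal k"
  shows "v (\<tau> x) = v x"
proof -
  have le: "v x \<le> v (\<sigma> x)" if \<sigma>: "\<sigma> \<in> Gal k" and x: "x \<noteq> 0" for \<sigma> x
  proof -
    define y where "y = x * \<pi> powi (1 - v x)"
    have "v y = 1" "y \<noteq> 0"
      using x pi_nonzero by (simp_all add: y_def val_mult val_power_int val_pi)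
    then have "\<sigma> y \<in> mpow v 1"
      by (rule Gal_mpow1[OF _ _ \<sigma>])
    moreover have "\<sigma> x \<noteq> 0" "\<sigma> \<pi> \<noteq> 0"
      using Gal_eq_0_iff[OF \<sigma>] x pi_nonzero by auto
    ultimately show ?thesis
      by (simp add: y_def mpow_iff Gal_mult[OF \<sigma>] Gal_power_int[OF \<sigma>] val_mult val_power_int
          Gal_val_pi[OF \<sigma>])
  qed
  show ?thesis
  proof (cases "x = 0")
    case False
    then have "v (\<tau> x) \<le> v (inv \<tau> (\<tau> x))"
      using le[OF inv_in_Gal[OF \<tau>]] Gal_eq_0_iff[OF \<tau>] by simp
    then show ?thesis
      using le[OF \<tau> False] Gal_apply_inv[OF \<tau>] by simp
  qed (simp add: Gal_zero[OF \<tau>])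
qed

lemma Gal_mpow: "\<tau> \<in> Gal k \<Longrightarrow> x \<in> mpow v B \<Longrightarrow> \<tau> x \<in> mpow v B"
  by (simp add: mpow_iff Gal_val Gal_eq_0_iff)

lemma Tr_mpow: "x \<in> mpow v B \<Longrightarrow> Tr k x \<in> mpow v B"
  unfolding Tr_def by (intro mpow_sum) (auto intro: Gal_mpow)

lemma val_affine_no_residue_rep:
  assumes \<epsilon>: "\<epsilon> \<in> mpow v 0" and no_rep: "\<forall>c\<in>k \<inter> mpow v 0. \<epsilon> - c \<notin> mpow v 1"
    and "d \<in> k" "d \<noteq> 0" "c \<in> k"
  shows "d * \<epsilon> + c \<noteq> 0 \<and> (\<exists>w. v (d * \<epsilon> + c) = int n * w)"
proof -
  define e where "e = c / d"
  have e: "e \<in> k"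
    unfolding e_def using k_closed(7)[OF assms(5,3)] .
  have shifted: "\<epsilon> + e \<noteq> 0 \<and> (\<exists>w. v (\<epsilon> + e) = int n * w)"
  proof (cases "e \<in> mpow v 0")
    case True
    then have "\<epsilon> - (- e) \<notin> mpow v 1"
      using no_rep e k_closed(5) mpow_minus by blast
    moreover have "\<epsilon> + e \<in> mpow v 0"
      using \<epsilon> True mpow_add by blast
    ultimately have "\<epsilon> + e \<noteq> 0" "v (\<epsilon> + e) = int n * 0"
      by (auto simp: mpow_iff)
    then show ?thesis
      by blast
  next
    case False
    then have "e \<noteq> 0" "\<epsilon> \<in> mpow v (v e + 1)"
      using \<epsilon> by (auto simp: mpow_iff)
    then have "e + \<epsilon> \<noteq> 0 \<and> v (e + \<epsilon>) = v e"
      by (rule val_add_eq_left)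
    then show ?thesis
      using val_k_dvd[OF e \<open>e \<noteq> 0\<close>] by (simp add: add.commute)
  qed
  then obtain w' where w': "\<epsilon> + e \<noteq> 0" "v (\<epsilon> + e) = int n * w'"
    by blast
  obtain w where w: "v d = int n * w"
    using val_k_dvd assms(3,4) by blast
  have eq: "d * \<epsilon> + c = d * (\<epsilon> + e)"
    using assms(4) by (simp add: e_def field_simps)
  have "v (d * \<epsilon> + c) = int n * (w + w')"
    unfolding eq val_mult[OF assms(4) w'(1)] w w'(2) by (simp add: distrib_left)
  then show ?thesis
    unfolding eq using assms(4) w'(1) by auto
qed

text \<open>The residue field of K is that of k: otherwise 1, \<pi>, \<dots>, \<pi>^(n-1), \<epsilon> would be
  k-linearly independent, since the nonzero terms of a relation have pairwise distinct valuations
  modulo n.\<close>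

lemma residue_rep_in_k:
  assumes \<epsilon>: "\<epsilon> \<in> mpow v 0"
  shows "\<exists>c\<in>k \<inter> mpow v 0. \<epsilon> - c \<in> mpow v 1"
proof (rule ccontr)
  assume "\<not> ?thesis"
  then have no_rep: "\<forall>c\<in>k \<inter> mpow v 0. \<epsilon> - c \<notin> mpow v 1" by blast
  obtain c where c_k: "\<forall>q\<in>{..n}. c q \<in> k" and c_nz: "\<exists>q\<in>{..n}. c q \<noteq> 0"
    and rel: "(\<Sum>q\<in>{..n}. c q * (if q = n then \<epsilon> else \<pi> ^ q)) = 0"
    using k_linear_dependent[of "{..n}"] by fastforce
  define t where "t q = c q * \<pi> ^ q + (if q = 0 then c n * \<epsilon> else 0)" for q
  have "(\<Sum>q<n. t q) = (\<Sum>q\<in>{..n}. c q * (if q = n then \<epsilon> else \<pi> ^ q))"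
    using card_Gal_pos by (simp add: t_def sum.distrib lessThan_Suc_atMost[symmetric])
  then have sum_t: "(\<Sum>q<n. t q) = 0"
    using rel by simp
  have t0: "t 0 \<noteq> 0 \<and> (\<exists>w. v (t 0) = int n * w)" if "c n \<noteq> 0"
    using val_affine_no_residue_rep[OF \<epsilon> no_rep, of "c n" "c 0"] c_k that
    by (simp add: t_def add.commute)
  have mod_vals: "\<exists>w. v (t q) = int n * w + int q" if q: "q < n" "t q \<noteq> 0" for q
  proof (cases "q = 0 \<and> c n \<noteq> 0")
    case True
    then show ?thesis using t0 by simp
  next
    case False
    then have "t q = c q * \<pi> ^ q" "c q \<noteq> 0"
      using q by (auto simp: t_def split: if_splits)
    moreover obtain w where "v (c q) = int n * w"
      using val_k_dvd c_k q(1) \<open>c q \<noteq> 0\<close> by fastforce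
    ultimately show ?thesis
      using pi_nonzero by (intro exI[of _ w]) (simp add: val_mult val_power val_pi)
  qed
  have t_zero: "t q = 0" if "q < n" for q
  proof (rule sum_distinct_vals_eq_0[OF finite_lessThan sum_t])
    show "q \<in> {..<n}"
      using that by simp
  qed (rule distinct_vals_mod[OF mod_vals])
  have "c n = 0"
    using t0 t_zero[OF card_Gal_pos] by blast
  then have "c q = 0" if "q \<le> n" for q
    using t_zero[of q] that pi_nonzero by (cases "q = n") (auto simp: t_def split: if_splits)
  then show False
    using c_nz by auto
qed

definition codifferent :: "'a set" where
  "codifferent = {x. \<forall>y\<in>mpow v 0. Tr k (x * y) \<in> k \<inter> mpow v 0}"

lemma codifferent_iff: "x \<in> codifferent \<longleftrightarrow> (\<forall>y\<in>mpow v 0. Tr k (x * y) \<in> mpow v 0)"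
  by (auto simp: codifferent_def Tr_in_k)

lemma codifferent_Tr: "x \<in> codifferent \<Longrightarrow> Tr k x \<in> mpow v 0"
  using codifferent_iff one_in_mpow by fastforce

lemma codifferent_mpow_closed:
  assumes "x1 \<in> codifferent" "x1 \<noteq> 0" "x \<in> mpow v (v x1)"
  shows "x \<in> codifferent"
  unfolding codifferent_iff
proof
  fix y assume y: "y \<in> mpow v 0"
  have "x / x1 \<in> mpow v 0"
    using assms(2,3) by (cases "x = 0") (auto simp: mpow_iff val_divide)
  then have "Tr k (x1 * (x / x1 * y)) \<in> mpow v 0"
    using assms(1) mpow_mult[OF _ y] unfolding codifferent_iff by fastforce
  then show "Tr k (x * y) \<in> mpow v 0"
    using assms(2) by simp
qed

lemma codifferent_val_bounded: "\<exists>L. \<forall>x\<in>codifferent. x \<noteq> 0 \<longrightarrow> L \<le> v x"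
proof -
  obtain x0 where "Tr k x0 \<noteq> 0"
    using Tr_nonzero by blast
  moreover obtain wt where wt: "v (Tr k x0) = int n * wt"
    using val_k_dvd[OF Tr_in_k] calculation by blast
  moreover obtain c where c: "c \<in> k" "c \<noteq> 0" "v c = int n * (- wt - 1)"
    using val_k_exists by blast
  ultimately have x0: "x0 \<noteq> 0" and Tr_c_x0: "Tr k (c * x0) \<notin> mpow v 0"
    using card_Gal_pos by (auto simp: Tr_scale mpow_iff val_mult algebra_simps)
  have "v x0 + v c \<le> v x" if "x \<in> codifferent" "x \<noteq> 0" for x
  proof (rule ccontr)
    assume "\<not> v x0 + v c \<le> v x"
    then have "x0 * c / x \<in> mpow v 0"
      using x0 c(2) that(2) by (simp add: mpow_iff val_divide val_mult)
    then have "Tr k (c * x0) \<in> mpow v 0"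
      using that codifferent_iff[of x] by (auto simp: ac_simps)
    then show False
      using Tr_c_x0 by contradiction
  qed
  then show ?thesis by blast
qed

lemma codifferent_eq_mpow: "\<exists>\<delta>. codifferent = mpow v \<delta>"
proof -
  obtain L where L: "\<And>x. x \<in> codifferent \<Longrightarrow> x \<noteq> 0 \<Longrightarrow> L \<le> v x"
    using codifferent_val_bounded by blast
  have "1 \<in> codifferent - {0}"
    using Tr_mpow by (simp add: codifferent_iff)
  then obtain x1 where x1: "x1 \<in> codifferent - {0}"
    and x1_min: "\<And>x. x \<in> codifferent - {0} \<Longrightarrow> nat (v x1 - L) \<le> nat (v x - L)"
    using ex_has_least_nat[of "\<lambda>x. x \<in> codifferent - {0}" 1 "\<lambda>x. nat (v x - L)"] by blast
  have "v x1 \<le> v x" if "x \<in> codifferent" "x \<noteq> 0" for x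
    using x1_min[of x] L[of x] L[of x1] x1 that by auto
  then have "codifferent = mpow v (v x1)"
  proof (intro set_eqI iffI)
    fix x assume "x \<in> codifferent"
    then show "x \<in> mpow v (v x1)"
      using \<open>\<And>x. x \<in> codifferent \<Longrightarrow> x \<noteq> 0 \<Longrightarrow> v x1 \<le> v x\<close> by (auto simp: mpow_iff)
  next
    fix x assume "x \<in> mpow v (v x1)"
    then show "x \<in> codifferent"
      using x1 codifferent_mpow_closed by blast
  qed
  then show ?thesis ..
qed

lemma codifferent_different_val: "codifferent = mpow v (- different_val k v)"
proof -
  obtain \<delta> where \<delta>: "codifferent = mpow v \<delta>"
    using codifferent_eq_mpow by blast
  have "different_val k v = - \<delta>"
    unfolding different_val_def
    using \<delta> mpow_eq_iff by (intro the_equality) (auto simp: codifferent_def)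
  then show ?thesis
    using \<delta> by simp
qed

lemma Tr_mpow_depth:
  assumes y: "y \<in> mpow v t"
  shows "Tr k y \<in> mpow v (t + depth k v)"
proof (rule ccontr)
  assume H: "Tr k y \<notin> mpow v (t + depth k v)"
  then have Tr_nz: "Tr k y \<noteq> 0" and "y \<noteq> 0"
    by auto
  obtain q where q: "v (Tr k y) = int n * q"
    using val_k_dvd[OF Tr_in_k Tr_nz] by blast
  obtain c where c: "c \<in> k" "c \<noteq> 0" "v c = int n * (q + 1)"
    using val_k_exists by blast
  have "int n * q < t + depth k v" "t \<le> v y"
    using H Tr_nz q y \<open>y \<noteq> 0\<close> by (auto simp: mpow_iff)
  then have "y / c \<in> mpow v (- different_val k v)"
    using c \<open>y \<noteq> 0\<close> by (simp add: mpow_iff val_divide depth_def algebra_simps)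
  then have "Tr k y / c \<in> mpow v 0"
    using codifferent_Tr codifferent_different_val Tr_divide[OF c(1)] by fastforce
  then show False
    using Tr_nz c q card_Gal_pos by (simp add: mpow_iff val_divide algebra_simps)
qed

lemma Tr_mult_pi_depth_integral: "x \<in> mpow v 0 \<Longrightarrow> Tr k (x * \<pi> powi (- depth k v)) \<in> mpow v 0"
  using Tr_mpow_depth[OF mpow_mult[OF _ mpow_pi_power_int[of "- depth k v"]]] by simp

lemma c_pi_integral: "c_pi k v \<pi> \<in> mpow v 0"
  using Tr_mult_pi_depth_integral[OF one_in_mpow] by (simp add: c_pi_def)

lemma c_pi_unit: "c_pi k v \<pi> \<notin> mpow v 1"
proof
  assume cp: "c_pi k v \<pi> \<in> mpow v 1"
  define P where "P = \<pi> powi (- depth k v)"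
  have P: "P \<in> mpow v (- depth k v)" "P \<noteq> 0" "v P = - depth k v"
    using pi_nonzero by (simp_all add: P_def mpow_iff val_power_int val_pi)
  obtain w where w: "w \<in> k" "w \<noteq> 0" "v w = int n"
    using val_k_exists[of 1] by auto
  \<comment> \<open>reducing y modulo m to an element of k shows that P divided by w is in the codifferent\<close>
  have "Tr k (P / w * y) \<in> mpow v 0" if y: "y \<in> mpow v 0" for y
  proof -
    obtain c where c: "c \<in> k" "c \<in> mpow v 0" "y - c \<in> mpow v 1"
      using residue_rep_in_k[OF y] by blast
    have "Tr k (P * y) = Tr k (c * P + P * (y - c))"
      by (simp add: algebra_simps)
    also have "\<dots> = c * c_pi k v \<pi> + Tr k (P * (y - c))"
      by (simp add: Tr_add Tr_scale[OF c(1)] c_pi_def P_def)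
    finally have "Tr k (P * y) = c * c_pi k v \<pi> + Tr k (P * (y - c))" .
    moreover have "c * c_pi k v \<pi> \<in> mpow v 1"
      using mpow_mult[OF c(2) cp] by simp
    moreover have "Tr k (P * (y - c)) \<in> mpow v 1"
      using Tr_mpow_depth[OF mpow_mult[OF P(1) c(3)]] by simp
    ultimately have "Tr k (P * y) \<in> mpow v (int n)"
      using k_mpow_pos Tr_in_k mpow_add by metis
    moreover have "Tr k (P / w * y) = Tr k (P * y) / w"
      using Tr_divide[OF w(1), of "P * y"] by (simp add: field_simps)
    ultimately show ?thesis
      using w by (cases "Tr k (P * y) = 0") (auto simp: mpow_iff val_divide)
  qed
  then have "P / w \<in> mpow v (- different_val k v)"
    using codifferent_different_val codifferent_iff by blast
  then show False
    using P w by (simp add: mpow_iff val_divide depth_def)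
qed

lemma klin_Tr: "klin k (\<lambda>x. Tr k (c * x))"
  unfolding klin_def by (simp add: Tr_in_k distrib_left Tr_add mult.left_commute[of c] Tr_scale)

text \<open>Testing a tensor against the functionals Tr(c _) \<otimes> Tr(c' _) and using the independence
  of characters twice recovers all its images under \<tau> \<otimes> \<tau>'.\<close>

lemma teq_Gal_pair:
  assumes "teq k xs ys" "\<tau> \<in> Gal k" "\<tau>' \<in> Gal k"
  shows "(\<Sum>(a, b)\<leftarrow>xs. \<tau> a * \<tau>' b) = (\<Sum>(a, b)\<leftarrow>ys. \<tau> a * \<tau>' b)"
proof -
  define E where "E zs \<tau> \<tau>' = (\<Sum>(a, b)\<leftarrow>zs. \<tau> a * \<tau>' b)" for zs and \<tau> \<tau>' :: "'a \<Rightarrow> 'a"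
  have expand: "(\<Sum>(a, b)\<leftarrow>zs. Tr k (c * a) * Tr k (c' * b))
      = (\<Sum>\<tau>\<in>Gal k. \<tau> c * (\<Sum>\<tau>'\<in>Gal k. \<tau>' c' * E zs \<tau> \<tau>'))" for zs c c'
  proof -
    have "(\<Sum>(a, b)\<leftarrow>zs. Tr k (c * a) * Tr k (c' * b))
        = (\<Sum>(a, b)\<leftarrow>zs. \<Sum>\<tau>\<in>Gal k. \<Sum>\<tau>'\<in>Gal k. \<tau> c * (\<tau>' c' * (\<tau> a * \<tau>' b)))"
      unfolding Tr_def by (simp add: Gal_mult sum_product algebra_simps)
    also have "\<dots> = (\<Sum>\<tau>\<in>Gal k. \<Sum>\<tau>'\<in>Gal k. \<Sum>(a, b)\<leftarrow>zs. \<tau> c * (\<tau>' c' * (\<tau> a * \<tau>' b)))"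
      by (simp add: sum_list_sum_commute case_prod_unfold)
    also have "\<dots> = (\<Sum>\<tau>\<in>Gal k. \<tau> c * (\<Sum>\<tau>'\<in>Gal k. \<tau>' c' * E zs \<tau> \<tau>'))"
      unfolding E_def by (simp add: sum_distrib_left sum_list_const_mult case_prod_unfold)
    finally show ?thesis .
  qed
  have vanish: "(\<Sum>\<tau>\<in>Gal k. \<tau> c * (\<Sum>\<tau>'\<in>Gal k. \<tau>' c' * (E xs \<tau> \<tau>' - E ys \<tau> \<tau>'))) = 0" for c c'
  proof -
    have "(\<Sum>(a, b)\<leftarrow>xs. Tr k (c * a) * Tr k (c' * b)) = (\<Sum>(a, b)\<leftarrow>ys. Tr k (c * a) * Tr k (c' * b))"
      using assms(1) klin_Tr unfolding teq_def by blast
    then show ?thesis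
      unfolding expand by (simp add: right_diff_distrib sum_subtractf)
  qed
  have "(\<Sum>\<tau>'\<in>Gal k. \<tau>' c' * (E xs \<tau> \<tau>' - E ys \<tau> \<tau>')) = 0" for c'
    using Gal_independent[where c = "\<lambda>\<tau>. \<Sum>\<tau>'\<in>Gal k. \<tau>' c' * (E xs \<tau> \<tau>' - E ys \<tau> \<tau>')", OF _ assms(2)]
      vanish by (simp add: mult.commute)
  then have "E xs \<tau> \<tau>' - E ys \<tau> \<tau>' = 0"
    using Gal_independent[where c = "\<lambda>\<tau>'. E xs \<tau> \<tau>' - E ys \<tau> \<tau>'", OF _ assms(3)]
    by (simp add: mult.commute)
  then show ?thesis
    by (simp add: E_def)
qed

lemma teq_act: "teq k xs ys \<Longrightarrow> act k (phi xs) = act k (phi ys)"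
  unfolding act_def phi_def by (intro ext sum.cong refl) (simp add: teq_Gal_pair[OF _ id_in_Gal])

lemma Xmem_pi_power: "Xmem k v 0 [(\<pi> ^ j * e, inverse \<pi> ^ j * e')]"
  if "e \<in> mpow v 0" "e' \<in> mpow v 0"
proof -
  have "\<pi> ^ j \<in> mpow v (int j)" "inverse \<pi> ^ j \<in> mpow v (- int j)"
    using pi_nonzero by (simp_all add: mpow_iff val_power val_inverse val_pi)
  then show ?thesis
    using mpow_mult that by (intro X_generators_Xmem) fastforce
qed

lemma Xmem_residue_difference:
  assumes c: "c \<in> k" "e - c \<in> mpow v 1" and c': "c' \<in> k" "e' - c' \<in> mpow v 1"
    and e: "e \<in> mpow v 0" and e': "e' \<in> mpow v 0"
  shows "Xmem k v 1 (tadd [(\<pi> ^ j * e, inverse \<pi> ^ j * e')] (tneg [(c * c' * \<pi> ^ j, inverse \<pi> ^ j)]))"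
proof -
  define A where "A = \<pi> ^ j"
  define B where "B = inverse \<pi> ^ j"
  have A: "A \<in> mpow v (int j)" and B: "B \<in> mpow v (- int j)"
    using pi_nonzero by (simp_all add: A_def B_def mpow_iff val_power val_inverse val_pi)
  have c0: "c \<in> mpow v 0"
    using mpow_diff[OF e mpow_mono[OF c(2)]] by simp
  define W where "W = [(A * (e - c), B * e'), (c * A, B * (e' - c'))]"
  have "\<exists>J. A * (e - c) \<in> mpow v J \<and> B * e' \<in> mpow v (1 - J)"
    using mpow_mult[OF A c(2)] mpow_mult[OF B e'] by (intro exI[of _ "int j + 1"]) simp
  moreover have "\<exists>J. c * A \<in> mpow v J \<and> B * (e' - c') \<in> mpow v (1 - J)"
    using mpow_mult[OF c0 A] mpow_mult[OF B c'(2)] by (intro exI[of _ "int j"]) simp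
  ultimately have "X_generators v 1 W"
    by (simp add: W_def)
  moreover have "teq k (tadd [(A * e, B * e')] (tneg [(c * c' * A, B)])) W"
    unfolding W_def using teq_residue_expand c(1) c'(1) .
  ultimately show ?thesis
    unfolding A_def B_def using Xmem_teq X_generators_Xmem by blast
qed

definition p_coeff :: "int \<Rightarrow> (('a \<Rightarrow> 'a) \<Rightarrow> 'a) \<Rightarrow> nat \<Rightarrow> 'a" where
  "p_coeff l f j = act k f (\<pi> powi (int j - l)) / \<pi> ^ j"

lemma p_coeff_single: "p_coeff l (phi [(a, b)]) j = a * Tr k (b * \<pi> powi (int j - l)) / \<pi> ^ j"
  by (simp add: p_coeff_def act_phi_single)

lemma p_coeff_Cons: "p_coeff l (phi (y # ys)) j = p_coeff l (phi [y]) j + p_coeff l (phi ys) j"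
  unfolding p_coeff_def act_phi_Cons[of k y ys] by (simp add: add_divide_distrib)

lemma p_coeff_integral:
  assumes "a \<in> mpow v J" "b \<in> mpow v (i - J)"
  shows "p_coeff (depth k v + i) (phi [(a, b)]) j \<in> mpow v 0"
proof -
  have "Tr k (b * \<pi> powi (int j - (depth k v + i))) \<in> mpow v (i - J + (int j - (depth k v + i)) + depth k v)"
    using Tr_mpow_depth mpow_mult[OF assms(2) mpow_pi_power_int] by blast
  then have "a * Tr k (b * \<pi> powi (int j - (depth k v + i))) \<in> mpow v (int j)"
    using mpow_mult[OF assms(1)] by fastforce
  moreover have "inverse (\<pi> ^ j) \<in> mpow v (- int j)"
    using pi_nonzero by (simp add: mpow_iff val_inverse val_power val_pi)
  ultimately show ?thesis
    unfolding p_coeff_single divide_inverse using mpow_mult by fastforce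
qed

lemma p_coeff_normal:
  "p_coeff (depth k v) (phi [(\<pi> ^ j * e, inverse \<pi> ^ j * e')]) j'
    = e * Tr k (e' * \<pi> powi (int j' - int j - depth k v)) * \<pi> powi (int j - int j')"
  unfolding p_coeff_single using pi_nonzero
  by (simp add: power_int_diff power_int_add field_simps flip: power_int_of_nat)

text \<open>The trace lands in k, whose valuations are multiples of n; rounding up kills every
  coefficient but the j-th modulo m.\<close>

lemma p_coeff_normal_off_diag:
  assumes e: "e \<in> mpow v 0" and e': "e' \<in> mpow v 0" and j: "j < n" and j': "j' < n" "j' \<noteq> j"
  shows "p_coeff (depth k v) (phi [(\<pi> ^ j * e, inverse \<pi> ^ j * e')]) j' \<in> mpow v 1"
proof -
  define T where "T = Tr k (e' * \<pi> powi (int j' - int j - depth k v))"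
  have "e' * \<pi> powi (int j' - int j - depth k v) \<in> mpow v (0 + (int j' - int j - depth k v))"
    by (rule mpow_mult[OF e' mpow_pi_power_int])
  then have T: "T \<in> k" "T \<in> mpow v (int j' - int j)"
    unfolding T_def using Tr_in_k Tr_mpow_depth by fastforce+
  have coeff: "p_coeff (depth k v) (phi [(\<pi> ^ j * e, inverse \<pi> ^ j * e')]) j' = e * T * \<pi> powi (int j - int j')"
    unfolding T_def by (rule p_coeff_normal)
  show ?thesis
  proof (cases "j < j'")
    case True
    have "T \<in> mpow v 1"
      by (rule mpow_mono[OF T(2)]) (use True in simp)
    then have "e * T * \<pi> powi (int j - int j') \<in> mpow v (0 + int n + (int j - int j'))"
      using mpow_mult[OF mpow_mult[OF e k_mpow_pos[OF T(1)]] mpow_pi_power_int] by blast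
    then show ?thesis
      unfolding coeff by (rule mpow_mono) (use j' in simp)
  next
    case False
    have "T \<in> mpow v (1 - int n)"
      by (rule mpow_mono[OF T(2)]) (use j in simp)
    then have "e * T * \<pi> powi (int j - int j') \<in> mpow v (0 + 0 + (int j - int j'))"
      using mpow_mult[OF mpow_mult[OF e k_mpow_nonneg[OF T(1)]] mpow_pi_power_int] by blast
    then show ?thesis
      unfolding coeff by (rule mpow_mono) (use j' False in simp)
  qed
qed

end

text \<open>The value v 0 is arbitrary, so v \<pi> = 1 alone does not rule out \<pi> = 0; the
  normalisation of r_X does.\<close>

lemma is_rX_pi_nonzero:
  assumes rX: "is_rX k v \<pi> r \<rho>"
  shows "\<pi> \<noteq> 0"
proof
  assume "\<pi> = 0"
  have nil: "Xmem k v 0 []" and zero: "Xmem k v 0 [(0, 0)]" and "Xmem k v 1 (tadd [(0, 0)] (tneg []))"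
    by (auto intro!: X_generators_Xmem simp: tadd_def tneg_def mpow_def)
  then have "\<rho> [(0, 0)] = \<rho> []"
    using rX unfolding is_rX_def Let_def by blast
  moreover have "\<rho> [] = \<rho> [] + \<rho> []"
    using rX nil unfolding is_rX_def Let_def tadd_def by fastforce
  then have "\<rho> [] = 0"
    by (simp only: add_cancel_right_right)
  moreover have "\<rho> [(\<pi>, inverse \<pi>)] = [:0, 1:] mod Xn1 (card (Gal k))"
    using rX unfolding is_rX_def Let_def by blast
  ultimately have "Xn1 (card (Gal k)) dvd ([:0, 1:] :: 'b poly)"
    using \<open>\<pi> = 0\<close> by (simp add: dvd_eq_mod_eq_0)
  then obtain h where "([:0, 1:] :: 'b poly) = Xn1 (card (Gal k)) * h" ..
  then have "poly ([:0, 1:] :: 'b poly) 1 = poly (Xn1 (card (Gal k))) 1 * poly h 1"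
    by simp
  then show False
    by (simp add: Xn1_def poly_monom)
qed

locale tensor_reduction = totally_ramified_galois v k \<pi> for v :: "'a::field \<Rightarrow> int" and k \<pi> +
  fixes r :: "'a \<Rightarrow> 'b::field" and \<rho> :: "('a \<times> 'a) list \<Rightarrow> 'b poly"
  assumes residue_map: "residue_map v r" and rX: "is_rX k v \<pi> r \<rho>"
begin

lemma r_add: "x \<in> mpow v 0 \<Longrightarrow> y \<in> mpow v 0 \<Longrightarrow> r (x + y) = r x + r y"
  using residue_map unfolding residue_map_def by blast

lemma r_mult: "x \<in> mpow v 0 \<Longrightarrow> y \<in> mpow v 0 \<Longrightarrow> r (x * y) = r x * r y"
  using residue_map unfolding residue_map_def by blast

lemma r_eq_0_iff: "x \<in> mpow v 0 \<Longrightarrow> r x = 0 \<longleftrightarrow> x \<in> mpow v 1"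
  using residue_map unfolding residue_map_def by blast

lemma r_mpow1: "x \<in> mpow v 1 \<Longrightarrow> r x = 0"
  using r_eq_0_iff mpow_mono[of x 1 0] by simp

lemma r_zero [simp]: "r 0 = 0"
  by (simp add: r_mpow1)

lemma r_congruent:
  assumes "x \<in> mpow v 0" "x - c \<in> mpow v 1"
  shows "r x = r c"
proof -
  have "x - c \<in> mpow v 0"
    using assms(2) mpow_mono by fastforce
  then have "r x = r c + r (x - c)"
    using r_add[of c "x - c"] mpow_diff[OF assms(1)] by fastforce
  then show ?thesis
    using r_mpow1[OF assms(2)] by simp
qed

lemma r_c_pi_nonzero: "r (c_pi k v \<pi>) \<noteq> 0"
  using r_eq_0_iff[OF c_pi_integral] c_pi_unit by simp

lemma rho_eq_iff:
  "Xmem k v 0 xs \<Longrightarrow> Xmem k v 0 ys \<Longrightarrow> \<rho> xs = \<rho> ys \<longleftrightarrow> Xmem k v 1 (tadd xs (tneg ys))"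
  using rX unfolding is_rX_def Let_def by blast

lemma rho_add: "Xmem k v 0 xs \<Longrightarrow> Xmem k v 0 ys \<Longrightarrow> \<rho> (tadd xs ys) = \<rho> xs + \<rho> ys"
  using rX unfolding is_rX_def Let_def by blast

lemma rho_mult: "Xmem k v 0 xs \<Longrightarrow> Xmem k v 0 ys \<Longrightarrow> \<rho> (tmul xs ys) = (\<rho> xs * \<rho> ys) mod Xn1 n"
  using rX unfolding is_rX_def Let_def by blast

lemma rho_scale: "c \<in> k \<Longrightarrow> c \<in> mpow v 0 \<Longrightarrow> Xmem k v 0 xs \<Longrightarrow> \<rho> (tscal c xs) = smult (r c) (\<rho> xs)"
  using rX unfolding is_rX_def Let_def by blast

lemma rho_one: "\<rho> [(1, 1)] = 1"
  using rX unfolding is_rX_def Let_def by blast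

lemma rho_X: "\<rho> [(\<pi>, inverse \<pi>)] = [:0, 1:] mod Xn1 n"
  using rX unfolding is_rX_def Let_def by blast

lemma rho_teq: "teq k xs ys \<Longrightarrow> Xmem k v 0 ys \<Longrightarrow> \<rho> xs = \<rho> ys"
  using rho_eq_iff Xmem_teq Xmem_teq_diff by blast

lemma rho_Nil: "\<rho> [] = 0"
proof -
  have "\<rho> [] = \<rho> [] + \<rho> []"
    using rho_add[of "[]" "[]"] X_generators_Xmem[of v 0 "[]" k] by (simp add: tadd_def)
  then show ?thesis
    by (simp only: add_cancel_right_right)
qed

lemma rho_sum_list: "X_generators v 0 zs \<Longrightarrow> \<rho> zs = (\<Sum>z\<leftarrow>zs. \<rho> [z])"
proof (induction zs)
  case (Cons z zs)
  obtain a b where z: "z = (a, b)" by fastforce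
  have "Xmem k v 0 [z]" "Xmem k v 0 zs"
    using Cons.prems z by (auto intro!: X_generators_Xmem)
  then have "\<rho> (z # zs) = \<rho> [z] + \<rho> zs"
    using rho_add[of "[z]" zs] by (simp add: tadd_def)
  then show ?case
    using Cons z by simp
qed (simp add: rho_Nil)

lemma degree_Xn1_card_Gal: "degree (Xn1 n :: 'b poly) = n"
  by (rule degree_Xn1[OF card_Gal_pos])

lemma rho_pi_power_mod: "\<rho> [(\<pi> ^ j, inverse \<pi> ^ j)] = monom 1 j mod Xn1 n"
proof (induction j)
  case 0
  have "degree (1 :: 'b poly) < degree (Xn1 n :: 'b poly)"
    using degree_Xn1_card_Gal card_Gal_pos by simp
  then show ?case
    using rho_one by (simp add: mod_poly_less monom_0 one_pCons)
next
  case (Suc j)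
  have "tmul [(\<pi> ^ j, inverse \<pi> ^ j)] [(\<pi>, inverse \<pi>)] = [(\<pi> ^ Suc j, inverse \<pi> ^ Suc j)]"
    by (simp add: tmul_def power_Suc2)
  moreover have "Xmem k v 0 [(\<pi> ^ j, inverse \<pi> ^ j)]" "Xmem k v 0 [(\<pi>, inverse \<pi>)]"
    using Xmem_pi_power[of 1 1 j] Xmem_pi_power[of 1 1 1] by simp_all
  ultimately have "\<rho> [(\<pi> ^ Suc j, inverse \<pi> ^ Suc j)] = ((monom 1 j mod Xn1 n) * ([:0, 1:] mod Xn1 n)) mod Xn1 n"
    using rho_mult Suc rho_X by metis
  also have "\<dots> = monom 1 (Suc j) mod Xn1 n"
    by (simp add: mod_mult_eq monom_Suc monom_0 flip: mult_monom)
  finally show ?case .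
qed

lemma rho_pi_power: "j < n \<Longrightarrow> \<rho> [(\<pi> ^ j, inverse \<pi> ^ j)] = monom 1 j"
  using rho_pi_power_mod[of j] degree_Xn1_card_Gal by (simp add: mod_poly_less degree_monom_eq)

lemma p_map_p_coeff:
  "p_map k v \<pi> r l f = smult (inverse (r (c_pi k v \<pi>))) (\<Sum>j<n. monom (r (p_coeff l f j)) j)"
  by (simp add: p_map_def p_coeff_def)

lemma p_map_add:
  assumes "\<And>j. p_coeff l f j \<in> mpow v 0" "\<And>j. p_coeff l g j \<in> mpow v 0"
    and "\<And>j. p_coeff l h j = p_coeff l f j + p_coeff l g j"
  shows "p_map k v \<pi> r l h = p_map k v \<pi> r l f + p_map k v \<pi> r l g"
  unfolding p_map_p_coeff using assms
  by (simp add: r_add add_monom[symmetric] sum.distrib smult_add_right)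

lemma p_map_sum_list:
  assumes "X_generators v i ys"
  shows "p_map k v \<pi> r (depth k v + i) (phi ys) = (\<Sum>y\<leftarrow>ys. p_map k v \<pi> r (depth k v + i) (phi [y]))"
proof -
  have "(\<forall>j. p_coeff (depth k v + i) (phi ys) j \<in> mpow v 0) \<and>
    p_map k v \<pi> r (depth k v + i) (phi ys) = (\<Sum>y\<leftarrow>ys. p_map k v \<pi> r (depth k v + i) (phi [y]))"
    using assms
  proof (induction ys)
    case Nil
    then show ?case
      by (simp add: p_map_p_coeff p_coeff_def act_def phi_def)
  next
    case (Cons y ys)
    have head: "p_coeff (depth k v + i) (phi [y]) j \<in> mpow v 0" for j
      using Cons.prems p_coeff_integral by (cases y) auto
    have tail: "\<forall>j. p_coeff (depth k v + i) (phi ys) j \<in> mpow v 0"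
      "p_map k v \<pi> r (depth k v + i) (phi ys) = (\<Sum>y\<leftarrow>ys. p_map k v \<pi> r (depth k v + i) (phi [y]))"
      using Cons.IH Cons.prems by (cases y; simp)+
    have cons: "p_coeff (depth k v + i) (phi (y # ys)) j
        = p_coeff (depth k v + i) (phi [y]) j + p_coeff (depth k v + i) (phi ys) j" for j
      by (rule p_coeff_Cons)
    have "p_map k v \<pi> r (depth k v + i) (phi (y # ys))
        = p_map k v \<pi> r (depth k v + i) (phi [y]) + p_map k v \<pi> r (depth k v + i) (phi ys)"
      using head tail(1) cons by (intro p_map_add) auto
    then show ?case
      using head tail cons mpow_add by simp
  qed
  then show ?thesis ..
qed

lemma p_map_teq: "teq k xs ys \<Longrightarrow> p_map k v \<pi> r l (phi xs) = p_map k v \<pi> r l (phi ys)"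
  unfolding p_map_def by (simp only: teq_act)

lemma p_map_shift:
  "p_map k v \<pi> r (depth k v + i) (phi [(a, b)]) = p_map k v \<pi> r (depth k v) (phi [(a, b * \<pi> powi (- i))])"
proof -
  have "\<pi> powi (int j - (depth k v + i)) = \<pi> powi (- i) * \<pi> powi (int j - depth k v)" for j
    using power_int_add[of \<pi> "- i" "int j - depth k v"] pi_nonzero by (simp add: algebra_simps)
  then show ?thesis
    by (simp add: p_map_def act_phi_single mult.assoc)
qed

lemma r_Tr_c_pi:
  assumes e': "e' \<in> mpow v 0"
  shows "r (Tr k (e' * \<pi> powi (- depth k v))) = r e' * r (c_pi k v \<pi>)"
proof -
  obtain c' where c': "c' \<in> k" "c' \<in> mpow v 0" "e' - c' \<in> mpow v 1"
    using residue_rep_in_k[OF e'] by blast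
  have "Tr k (e' * \<pi> powi (- depth k v)) - c' * c_pi k v \<pi> = Tr k ((e' - c') * \<pi> powi (- depth k v))"
    by (simp add: c_pi_def left_diff_distrib Tr_diff Tr_scale[OF c'(1)])
  moreover have "(e' - c') * \<pi> powi (- depth k v) \<in> mpow v (1 + - depth k v)"
    using mpow_mult[OF c'(3) mpow_pi_power_int] .
  ultimately have "Tr k (e' * \<pi> powi (- depth k v)) - c' * c_pi k v \<pi> \<in> mpow v 1"
    using Tr_mpow_depth by fastforce
  then show ?thesis
    using Tr_mult_pi_depth_integral[OF e'] r_congruent r_mult[OF c'(2) c_pi_integral]
      r_congruent[OF e' c'(3)]
    by metis
qed

lemma rho_normal_tensor:
  assumes e: "e \<in> mpow v 0" and e': "e' \<in> mpow v 0" and j: "j < n"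
  shows "\<rho> [(\<pi> ^ j * e, inverse \<pi> ^ j * e')] = monom (r e * r e') j"
proof -
  obtain c where c: "c \<in> k" "c \<in> mpow v 0" "e - c \<in> mpow v 1"
    using residue_rep_in_k[OF e] by blast
  obtain c' where c': "c' \<in> k" "c' \<in> mpow v 0" "e' - c' \<in> mpow v 1"
    using residue_rep_in_k[OF e'] by blast
  have cc': "c * c' \<in> k" "c * c' \<in> mpow v 0"
    using k_closed(4)[OF c(1) c'(1)] mpow_mult[OF c(2) c'(2)] by simp_all
  have "Xmem k v 0 [(c * c' * \<pi> ^ j, inverse \<pi> ^ j)]"
    using Xmem_pi_power[OF cc'(2) one_in_mpow, of j] by (simp add: mult.commute)
  then have "\<rho> [(\<pi> ^ j * e, inverse \<pi> ^ j * e')] = \<rho> [(c * c' * \<pi> ^ j, inverse \<pi> ^ j)]"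
    using rho_eq_iff[OF Xmem_pi_power[OF e e']] Xmem_residue_difference[OF c(1,3) c'(1,3) e e'] by blast
  also have "\<dots> = \<rho> (tscal (c * c') [(\<pi> ^ j, inverse \<pi> ^ j)])"
    by (simp add: tscal_def)
  also have "\<dots> = monom (r c * r c') j"
    using rho_scale[OF cc' Xmem_pi_power[OF one_in_mpow one_in_mpow]] rho_pi_power[OF j] c(2) c'(2)
    by (simp add: smult_monom r_mult)
  finally show ?thesis
    using r_congruent[OF e c(3)] r_congruent[OF e' c'(3)] by simp
qed

lemma p_map_normal_tensor:
  assumes e: "e \<in> mpow v 0" and e': "e' \<in> mpow v 0" and j: "j < n"
  shows "p_map k v \<pi> r (depth k v) (phi [(\<pi> ^ j * e, inverse \<pi> ^ j * e')]) = monom (r e * r e') j"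
proof -
  define cf where "cf j' = p_coeff (depth k v) (phi [(\<pi> ^ j * e, inverse \<pi> ^ j * e')]) j'" for j'
  have "(\<Sum>j'<n. monom (r (cf j')) j') = monom (r (cf j)) j"
    using j p_coeff_normal_off_diag[OF e e' j] r_mpow1
    by (subst sum.remove[of _ j]) (auto intro!: sum.neutral simp: cf_def)
  moreover have "r (cf j) = r e * r e' * r (c_pi k v \<pi>)"
    using p_coeff_normal[of j e e' j] r_mult[OF e Tr_mult_pi_depth_integral[OF e']] r_Tr_c_pi[OF e']
    by (simp add: cf_def)
  ultimately show ?thesis
    using r_c_pi_nonzero unfolding p_map_p_coeff cf_def[symmetric]
    by (simp add: smult_monom field_simps)
qed

lemma rho_simple_tensor:
  assumes a: "a \<in> mpow v J" and b: "b \<in> mpow v (- J)"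
  shows "\<rho> [(a, b)] = p_map k v \<pi> r (depth k v) (phi [(a, b)])"
proof -
  define j where "j = nat (J mod int n)"
  have j: "j < n" "J = int n * (J div int n) + int j"
    using card_Gal_pos by (simp_all add: j_def nat_less_iff)
  obtain u where u: "u \<in> k" "u \<noteq> 0" "v u = int n * (J div int n)"
    using val_k_exists by blast
  define e where "e = a / (u * \<pi> ^ j)"
  define e' where "e' = u * \<pi> ^ j * b"
  have upi: "u * \<pi> ^ j \<noteq> 0" "v (u * \<pi> ^ j) = J"
    using u pi_nonzero j(2) by (simp_all add: val_mult val_power val_pi)
  have "inverse (u * \<pi> ^ j) \<in> mpow v (- J)"
    using val_inverse[OF upi(1)] upi(2) mpow_val_self[of "inverse (u * \<pi> ^ j)"] by simp
  then have "a * inverse (u * \<pi> ^ j) \<in> mpow v (J + - J)"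
    by (rule mpow_mult[OF a])
  then have e: "e \<in> mpow v 0"
    by (simp add: e_def divide_inverse)
  have "u * \<pi> ^ j \<in> mpow v J"
    using upi by (simp add: mpow_iff)
  then have "e' \<in> mpow v (J + - J)"
    unfolding e'_def using b by (rule mpow_mult)
  then have e': "e' \<in> mpow v 0"
    by simp
  have "teq k [(u * (\<pi> ^ j * e), inverse u * (inverse \<pi> ^ j * e'))] [(\<pi> ^ j * e, inverse \<pi> ^ j * e')]"
    using teq_scale_swap[OF u(1,2), of "\<pi> ^ j * e" "inverse u * (inverse \<pi> ^ j * e')"] u(2)
    by (simp add: mult.assoc[symmetric])
  moreover have "u * (\<pi> ^ j * e) = a" "inverse u * (inverse \<pi> ^ j * e') = b"
    using upi u(2) pi_nonzero by (simp_all add: e_def e'_def field_simps)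
  ultimately have normal: "teq k [(a, b)] [(\<pi> ^ j * e, inverse \<pi> ^ j * e')]"
    by simp
  have "\<rho> [(a, b)] = \<rho> [(\<pi> ^ j * e, inverse \<pi> ^ j * e')]"
    using rho_teq[OF normal Xmem_pi_power[OF e e']] .
  also have "\<dots> = p_map k v \<pi> r (depth k v) (phi [(\<pi> ^ j * e, inverse \<pi> ^ j * e')])"
    using rho_normal_tensor[OF e e' j(1)] p_map_normal_tensor[OF e e' j(1)] by simp
  also have "\<dots> = p_map k v \<pi> r (depth k v) (phi [(a, b)])"
    using p_map_teq[OF normal] by simp
  finally show ?thesis .
qed

lemma rho_shifted_generator:
  assumes a: "a \<in> mpow v J" and b: "b \<in> mpow v (i - J)"
  shows "X_generators v 0 [(a, b * \<pi> powi (- i))]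
    \<and> \<rho> [(a, b * \<pi> powi (- i))] = p_map k v \<pi> r (depth k v + i) (phi [(a, b)])"
proof -
  have "b * \<pi> powi (- i) \<in> mpow v (- J)"
    using mpow_mult[OF b mpow_pi_power_int[of "- i"]] by simp
  then show ?thesis
    using a rho_simple_tensor[OF a] p_map_shift by auto
qed

lemma rho_tmul_eq_p_map:
  assumes "Xmem k v i \<alpha>"
  shows "Xmem k v 0 (tmul \<alpha> [(1, \<pi> powi (- i))])
    \<and> \<rho> (tmul \<alpha> [(1, \<pi> powi (- i))]) = p_map k v \<pi> r (depth k v + i) (phi \<alpha>)"
proof -
  define P where "P = \<pi> powi (- i)"
  obtain ys where ys: "teq k \<alpha> ys" "X_generators v i ys"
    using assms unfolding Xmem_iff by blast
  define zs where "zs = tmul ys [(1, P)]"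
  have teq_zs: "teq k (tmul \<alpha> [(1, P)]) zs"
    unfolding zs_def by (rule teq_mult_right[OF ys(1)])
  have simple: "X_generators v 0 [(a, b * P)] \<and> \<rho> [(a, b * P)] = p_map k v \<pi> r (depth k v + i) (phi [(a, b)])"
    if ab: "(a, b) \<in> set ys" for a b
    using ys(2) ab rho_shifted_generator unfolding P_def X_generators_def by blast
  have gen_zs: "X_generators v 0 zs"
    using simple unfolding zs_def tmul_single X_generators_def by fastforce
  have X0: "Xmem k v 0 (tmul \<alpha> [(1, P)])"
    using Xmem_teq[OF teq_zs X_generators_Xmem[OF gen_zs]] .
  have "\<rho> (tmul \<alpha> [(1, P)]) = \<rho> zs"
    using rho_teq[OF teq_zs X_generators_Xmem[OF gen_zs]] .
  also have "\<dots> = (\<Sum>z\<leftarrow>zs. \<rho> [z])"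
    using rho_sum_list[OF gen_zs] .
  also have "\<dots> = (\<Sum>y\<leftarrow>ys. p_map k v \<pi> r (depth k v + i) (phi [y]))"
    unfolding zs_def tmul_single using simple
    by (simp add: case_prod_unfold o_def) (intro arg_cong[where f = sum_list] map_cong; auto)
  also have "\<dots> = p_map k v \<pi> r (depth k v + i) (phi \<alpha>)"
    using p_map_sum_list[OF ys(2)] p_map_teq[OF ys(1)] by simp
  finally show ?thesis
    using X0 by (simp add: P_def)
qed

end

theorem theorem2p2p2:
  fixes k :: "'a::field set" and v :: "'a \<Rightarrow> int" and \<pi> :: 'a
    and r :: "'a \<Rightarrow> 'b::field" and \<rho> :: "('a \<times> 'a) list \<Rightarrow> 'b poly" and i :: int
  assumes "is_subfield k"
    and "discrete_val v"
    and "v_complete v UNIV" and "v_complete v k"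
    and "finite_galois k"
    and "v ` (k - {0}) = range (\<lambda>z. int (card (Gal k)) * z)"
    and "v \<pi> = 1"
    and "residue_map v r"
    and "is_rX k v \<pi> r \<rho>"
  shows "(\<forall>\<alpha>. Xmem k v i \<alpha> \<longrightarrow>
            Xmem k v 0 (tmul \<alpha> [(1, \<pi> powi (- i))]) \<and>
            \<rho> (tmul \<alpha> [(1, \<pi> powi (- i))]) = p_map k v \<pi> r (depth k v + i) (phi \<alpha>))
       \<and> (\<forall>\<alpha>. \<forall>\<sigma>\<in>Gal k. phi (tswap \<alpha>) \<sigma> = \<sigma> (phi \<alpha> (inv \<sigma>)))"
proof -
  interpret tensor_reduction v k \<pi> r \<rho>
    using assms is_rX_pi_nonzero[OF assms(9)] by unfold_locales auto
  show ?thesis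
    using rho_tmul_eq_p_map phi_tswap by blast
qed

end
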